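(* Let $l:R\to S$ be a Frobenius extension of two-sided Noetherian rings such that ${}_RS_R$ is centrally projective over $R$, and let ${}_R\omega$ be a Wakamatsu tilting left $R$-module. Put $T=\mathrm{End}_R(\omega)$ and $\Gamma=\mathrm{End}_S(S\otimes_R\omega)$, and let $\rho:T\to\Gamma$ be the ring homomorphism given by $\rho(f)(s\otimes w)=s\otimes (w\cdot f)$ for $f\in T$, $s\in S$, $w\in\omega$. If the projective dimension of the right $T$-module $\omega_T$ is finite, then $\rho:T\to\Gamma$ is a Frobenius extension, i.e. ${}_T\Gamma$ is finitely generated projective and ${}_\Gamma\Gamma_T\cong\mathrm{Hom}_T({}_T\Gamma_\Gamma,{}_TT_T)$ as $\Gamma$-$T$-bimodules.
   Context: All modules are finitely generated left modules unless stated otherwise; endomorphisms of a left module act on the right, so $\omega$ is an $R$-$T$-bimodule. A ring extension $S/R$ is a unital ring homomorphism $l:R\to S$; $S$ is an $R$-$R$-bimodule via $l$. $S/R$ is a Frobenius extension if ${}_RS$ is finitely generated projective and ${}_SS_R\cong \mathrm{Hom}_R({}_RS_S,{}_RR_R)$ as $S$-$R$-bimodules. ${}_RS_R$ is centrally projective over $R$ if it is isomorphic as an $R$-$R$-bimodule to a direct summand of a finite direct sum of copies of ${}_RR_R$. For a module $W$ over a ring $A$, $\mathrm{add}\,W$ is the class of direct summands of finite direct sums of copies of $W$; a map $g:N\to C$ with $C\in\mathrm{add}\,W$ is a left $\mathrm{add}\,W$-approximation if every map $N\to X$, $X\in\mathrm{add}\,W$, factors through $g$. $\mathrm{fadim}_AW\ge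 n$ means there is an exact sequence $0\to A\xrightarrow{f_1}W_1\to\cdots\xrightarrow{f_n}W_n$ with $W_i\in\mathrm{add}\,W$ and each $\mathrm{Im}f_i\to W_i$ a left $\mathrm{add}\,W$-approximation; $\mathrm{fadim}_AW=\infty$ if this holds for all $n$. $W$ is Wakamatsu tilting if $\mathrm{Ext}^i_A(W,W)=0$ for all $i\ge1$ and $\mathrm{fadim}_AW=\infty$. *)

theory Defs
  imports "HOL-Algebra.Ring"
begin

record ('a, 'm) lmod =
  mcar :: "'m set"
  madd :: "'m \<Rightarrow> 'm \<Rightarrow> 'm"
  mzero :: 'm
  msmul :: "'a \<Rightarrow> 'm \<Rightarrow> 'm"

definition is_lmod :: "'a ring \<Rightarrow> ('a, 'm) lmod \<Rightarrow> bool" where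
  "is_lmod A M \<longleftrightarrow> ring A \<and>
     (\<forall>x\<in>mcar M. \<forall>y\<in>mcar M. madd M x y \<in> mcar M) \<and>
     (\<forall>x\<in>mcar M. \<forall>y\<in>mcar M. \<forall>z\<in>mcar M. madd M (madd M x y) z = madd M x (madd M y z)) \<and>
     (\<forall>x\<in>mcar M. \<forall>y\<in>mcar M. madd M x y = madd M y x) \<and>
     mzero M \<in> mcar M \<and>
     (\<forall>x\<in>mcar M. madd M (mzero M) x = x) \<and>
     (\<forall>x\<in>mcar M. \<exists>y\<in>mcar M. madd M x y = mzero M) \<and>
     (\<forall>a\<in>carrier A. \<forall>x\<in>mcar M. msmul M a x \<in> mcar M) \<and>
     (\<forall>a\<in>carrier A. \<forall>x\<in>mcar M. \<forall>y\<in>mcar M. msmul M a (madd M x y) = madd M (msmul M a x) (msmul M a y)) \<and>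
     (\<forall>a\<in>carrier A. \<forall>b\<in>carrier A. \<forall>x\<in>mcar M. msmul M (a \<oplus>\<^bsub>A\<^esub> b) x = madd M (msmul M a x) (msmul M b x)) \<and>
     (\<forall>a\<in>carrier A. \<forall>b\<in>carrier A. \<forall>x\<in>mcar M. msmul M (a \<otimes>\<^bsub>A\<^esub> b) x = msmul M a (msmul M b x)) \<and>
     (\<forall>x\<in>mcar M. msmul M \<one>\<^bsub>A\<^esub> x = x)"

text \<open>A-linear maps, extensional on the source carrier (so that equality of maps is meaningful).\<close>
definition lin :: "'a ring \<Rightarrow> ('a, 'm) lmod \<Rightarrow> ('a, 'n) lmod \<Rightarrow> ('m \<Rightarrow> 'n) \<Rightarrow> bool" where
  "lin A M N f \<longleftrightarrow> f \<in> mcar M \<rightarrow> mcar N \<and> f \<in> extensional (mcar M) \<and>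
     (\<forall>x\<in>mcar M. \<forall>y\<in>mcar M. f (madd M x y) = madd N (f x) (f y)) \<and>
     (\<forall>a\<in>carrier A. \<forall>x\<in>mcar M. f (msmul M a x) = msmul N a (f x))"

definition regmod :: "'a ring \<Rightarrow> ('a, 'a) lmod" where
  "regmod A = \<lparr>mcar = carrier A, madd = (\<lambda>x y. x \<oplus>\<^bsub>A\<^esub> y), mzero = \<zero>\<^bsub>A\<^esub>,
               msmul = (\<lambda>a x. a \<otimes>\<^bsub>A\<^esub> x)\<rparr>"

definition freemod :: "'a ring \<Rightarrow> nat \<Rightarrow> ('a, nat \<Rightarrow> 'a) lmod" where
  "freemod A n = \<lparr>mcar = {v. (\<forall>i<n. v i \<in> carrier A) \<and> (\<forall>i\<ge>n. v i = \<zero>\<^bsub>A\<^esub>)},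
     madd = (\<lambda>v w i. if i < n then v i \<oplus>\<^bsub>A\<^esub> w i else \<zero>\<^bsub>A\<^esub>),
     mzero = (\<lambda>i. \<zero>\<^bsub>A\<^esub>),
     msmul = (\<lambda>a v i. if i < n then a \<otimes>\<^bsub>A\<^esub> v i else \<zero>\<^bsub>A\<^esub>)\<rparr>"

definition freemod_rsmul :: "'a ring \<Rightarrow> nat \<Rightarrow> (nat \<Rightarrow> 'a) \<Rightarrow> 'a \<Rightarrow> (nat \<Rightarrow> 'a)" where
  "freemod_rsmul A n v r = (\<lambda>i. if i < n then v i \<otimes>\<^bsub>A\<^esub> r else \<zero>\<^bsub>A\<^esub>)"

definition freeon :: "'a ring \<Rightarrow> 'i set \<Rightarrow> ('a, 'i \<Rightarrow> 'a) lmod" where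
  "freeon A I = \<lparr>mcar = {v. finite {i. v i \<noteq> \<zero>\<^bsub>A\<^esub>} \<and> (\<forall>i\<in>I. v i \<in> carrier A) \<and> (\<forall>i. i \<notin> I \<longrightarrow> v i = \<zero>\<^bsub>A\<^esub>)},
     madd = (\<lambda>v w i. if i \<in> I then v i \<oplus>\<^bsub>A\<^esub> w i else \<zero>\<^bsub>A\<^esub>),
     mzero = (\<lambda>i. \<zero>\<^bsub>A\<^esub>),
     msmul = (\<lambda>a v i. if i \<in> I then a \<otimes>\<^bsub>A\<^esub> v i else \<zero>\<^bsub>A\<^esub>)\<rparr>"

definition powmod :: "('a, 'm) lmod \<Rightarrow> nat \<Rightarrow> ('a, nat \<Rightarrow> 'm) lmod" where
  "powmod M m = \<lparr>mcar = {x. (\<forall>i<m. x i \<in> mcar M) \<and> (\<forall>i\<ge>m. x i = mzero M)},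
     madd = (\<lambda>x y i. if i < m then madd M (x i) (y i) else mzero M),
     mzero = (\<lambda>i. mzero M),
     msmul = (\<lambda>a x i. if i < m then msmul M a (x i) else mzero M)\<rparr>"

definition submod :: "('a, 'm) lmod \<Rightarrow> 'm set \<Rightarrow> ('a, 'm) lmod" where
  "submod M U = M\<lparr>mcar := U\<rparr>"

definition mker :: "('m \<Rightarrow> 'n) \<Rightarrow> ('a, 'm) lmod \<Rightarrow> ('a, 'n) lmod \<Rightarrow> 'm set" where
  "mker f M N = {x \<in> mcar M. f x = mzero N}"

definition fin_gen :: "'a ring \<Rightarrow> ('a, 'm) lmod \<Rightarrow> bool" where
  "fin_gen A M \<longleftrightarrow> (\<exists>n p. lin A (freemod A n) M p \<and> p ` mcar (freemod A n) = mcar M)"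

definition fg_proj :: "'a ring \<Rightarrow> ('a, 'm) lmod \<Rightarrow> bool" where
  "fg_proj A M \<longleftrightarrow> (\<exists>n p s. lin A (freemod A n) M p \<and> lin A M (freemod A n) s \<and>
                        (\<forall>x\<in>mcar M. p (s x) = x))"

text \<open>Projective = direct summand of a free module (w.l.o.g. free on the underlying set).\<close>
definition projective :: "'a ring \<Rightarrow> ('a, 'm) lmod \<Rightarrow> bool" where
  "projective A M \<longleftrightarrow> (\<exists>p s. lin A (freeon A (mcar M)) M p \<and> lin A M (freeon A (mcar M)) s \<and>
                        (\<forall>x\<in>mcar M. p (s x) = x))"

definition opring :: "'a ring \<Rightarrow> 'a ring" where
  "opring A = A\<lparr>mult := (\<lambda>x y. y \<otimes>\<^bsub>A\<^esub> x)\<rparr>"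

text \<open>Endomorphism ring of a left module; endomorphisms act on the right, so
  the product \<open>f g\<close> is "first f, then g".\<close>
definition endring :: "'a ring \<Rightarrow> ('a, 'm) lmod \<Rightarrow> ('m \<Rightarrow> 'm) ring" where
  "endring A M = \<lparr>carrier = {f. lin A M M f},
     mult = (\<lambda>f g. \<lambda>x\<in>mcar M. g (f x)),
     one = (\<lambda>x\<in>mcar M. x),
     zero = (\<lambda>x\<in>mcar M. mzero M),
     add = (\<lambda>f g. \<lambda>x\<in>mcar M. madd M (f x) (g x))\<rparr>"

definition left_ideal :: "'a ring \<Rightarrow> 'a set \<Rightarrow> bool" where
  "left_ideal A I \<longleftrightarrow> I \<subseteq> carrier A \<and> \<zero>\<^bsub>A\<^esub> \<in> I \<and>
     (\<forall>x\<in>I. \<forall>y\<in>I. x \<oplus>\<^bsub>A\<^esub> y \<in> I) \<and> (\<forall>x\<in>I. \<ominus>\<^bsub>A\<^esub> x \<in> I) \<and>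
     (\<forall>a\<in>carrier A. \<forall>x\<in>I. a \<otimes>\<^bsub>A\<^esub> x \<in> I)"

definition right_ideal :: "'a ring \<Rightarrow> 'a set \<Rightarrow> bool" where
  "right_ideal A I \<longleftrightarrow> I \<subseteq> carrier A \<and> \<zero>\<^bsub>A\<^esub> \<in> I \<and>
     (\<forall>x\<in>I. \<forall>y\<in>I. x \<oplus>\<^bsub>A\<^esub> y \<in> I) \<and> (\<forall>x\<in>I. \<ominus>\<^bsub>A\<^esub> x \<in> I) \<and>
     (\<forall>a\<in>carrier A. \<forall>x\<in>I. x \<otimes>\<^bsub>A\<^esub> a \<in> I)"

definition two_sided_noetherian :: "'a ring \<Rightarrow> bool" where
  "two_sided_noetherian A \<longleftrightarrow> ring A \<and>
     (\<forall>I :: nat \<Rightarrow> 'a set. (\<forall>n. left_ideal A (I n)) \<and> (\<forall>n. I n \<subseteq> I (Suc n)) \<longrightarrow>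
        (\<exists>N. \<forall>n\<ge>N. I n = I N)) \<and>
     (\<forall>I :: nat \<Rightarrow> 'a set. (\<forall>n. right_ideal A (I n)) \<and> (\<forall>n. I n \<subseteq> I (Suc n)) \<longrightarrow>
        (\<exists>N. \<forall>n\<ge>N. I n = I N))"

definition restr_mod :: "'a ring \<Rightarrow> 'b ring \<Rightarrow> ('a \<Rightarrow> 'b) \<Rightarrow> ('a, 'b) lmod" where
  "restr_mod A B l = \<lparr>mcar = carrier B, madd = (\<lambda>x y. x \<oplus>\<^bsub>B\<^esub> y), mzero = \<zero>\<^bsub>B\<^esub>,
                      msmul = (\<lambda>a x. l a \<otimes>\<^bsub>B\<^esub> x)\<rparr>"

text \<open>Frobenius extension: \<open>_AB\<close> f.g. projective and \<open>_BB_A \<cong> Hom_A(_AB_B, _AA_A)\<close>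
  as \<open>B\<close>-\<open>A\<close>-bimodules, where \<open>(b\<phi>a)(y) = \<phi>(y b) a\<close>.\<close>
definition frobenius_ext :: "'a ring \<Rightarrow> 'b ring \<Rightarrow> ('a \<Rightarrow> 'b) \<Rightarrow> bool" where
  "frobenius_ext A B l \<longleftrightarrow> ring A \<and> ring B \<and> l \<in> ring_hom A B \<and>
     fg_proj A (restr_mod A B l) \<and>
     (\<exists>\<psi>. bij_betw \<psi> (carrier B) {\<phi>. lin A (restr_mod A B l) (regmod A) \<phi>} \<and>
        (\<forall>x\<in>carrier B. \<forall>y\<in>carrier B.
            \<psi> (x \<oplus>\<^bsub>B\<^esub> y) = (\<lambda>z\<in>carrier B. \<psi> x z \<oplus>\<^bsub>A\<^esub> \<psi> y z)) \<and>
        (\<forall>s\<in>carrier B. \<forall>x\<in>carrier B. \<forall>r\<in>carrier A.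
            \<psi> (s \<otimes>\<^bsub>B\<^esub> x \<otimes>\<^bsub>B\<^esub> l r) = (\<lambda>y\<in>carrier B. \<psi> x (y \<otimes>\<^bsub>B\<^esub> s) \<otimes>\<^bsub>A\<^esub> r)))"

text \<open>\<open>_AB_A\<close> is a direct summand of \<open>A^n\<close> as an \<open>A\<close>-\<open>A\<close>-bimodule.\<close>
definition centrally_projective :: "'a ring \<Rightarrow> 'b ring \<Rightarrow> ('a \<Rightarrow> 'b) \<Rightarrow> bool" where
  "centrally_projective A B l \<longleftrightarrow> (\<exists>n p i.
     lin A (freemod A n) (restr_mod A B l) p \<and> lin A (restr_mod A B l) (freemod A n) i \<and>
     (\<forall>v\<in>mcar (freemod A n). \<forall>r\<in>carrier A. p (freemod_rsmul A n v r) = p v \<otimes>\<^bsub>B\<^esub> l r) \<and>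
     (\<forall>x\<in>carrier B. \<forall>r\<in>carrier A. i (x \<otimes>\<^bsub>B\<^esub> l r) = freemod_rsmul A n (i x) r) \<and>
     (\<forall>x\<in>carrier B. p (i x) = x))"

text \<open>A resolution of \<open>M\<close> by finitely generated free modules
  \<open>\<dots> \<rightarrow> A^{n 1} \<rightarrow>(d 0) A^{n 0} \<rightarrow>(\<epsilon>) M \<rightarrow> 0\<close>, with \<open>d k : A^{n (k+1)} \<rightarrow> A^{n k}\<close>.\<close>
definition fg_free_resolution :: "'a ring \<Rightarrow> ('a, 'm) lmod \<Rightarrow> (nat \<Rightarrow> nat) \<Rightarrow>
    (nat \<Rightarrow> (nat \<Rightarrow> 'a) \<Rightarrow> (nat \<Rightarrow> 'a)) \<Rightarrow> ((nat \<Rightarrow> 'a) \<Rightarrow> 'm) \<Rightarrow> bool" where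
  "fg_free_resolution A M n d \<epsilon> \<longleftrightarrow>
     lin A (freemod A (n 0)) M \<epsilon> \<and> \<epsilon> ` mcar (freemod A (n 0)) = mcar M \<and>
     (\<forall>k. lin A (freemod A (n (Suc k))) (freemod A (n k)) (d k)) \<and>
     mker \<epsilon> (freemod A (n 0)) M = d 0 ` mcar (freemod A (n 1)) \<and>
     (\<forall>k. mker (d k) (freemod A (n (Suc k))) (freemod A (n k)) =
          d (Suc k) ` mcar (freemod A (n (Suc (Suc k)))))"

text \<open>\<open>Ext^i_A(M,N) = 0\<close> for all \<open>i \<ge> 1\<close>: computed as the cohomology of
  \<open>Hom_A(P_\<bullet>, N)\<close> for a free resolution \<open>P_\<bullet>\<close> of \<open>M\<close> (the kernel of
  \<open>d_i^* : Hom(P_i,N) \<rightarrow> Hom(P_{i+1},N)\<close> equals the image of \<open>d_{i-1}^*\<close>);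
  required for every such resolution.\<close>
definition ext_vanish :: "'a ring \<Rightarrow> ('a, 'm) lmod \<Rightarrow> ('a, 'k) lmod \<Rightarrow> bool" where
  "ext_vanish A M N \<longleftrightarrow> (\<forall>n d \<epsilon>. fg_free_resolution A M n d \<epsilon> \<longrightarrow>
     (\<forall>i\<ge>1. \<forall>\<phi>. lin A (freemod A (n i)) N \<phi> \<and>
           (\<forall>x\<in>mcar (freemod A (n (Suc i))). \<phi> (d i x) = mzero N) \<longrightarrow>
         (\<exists>\<chi>. lin A (freemod A (n (i - 1))) N \<chi> \<and>
              (\<forall>x\<in>mcar (freemod A (n i)). \<phi> x = \<chi> (d (i - 1) x)))))"

definition in_add :: "'a ring \<Rightarrow> ('a, 'm) lmod \<Rightarrow> ('a, 'x) lmod \<Rightarrow> bool" where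
  "in_add A M X \<longleftrightarrow> is_lmod A X \<and> (\<exists>m p s. lin A (powmod M m) X p \<and> lin A X (powmod M m) s \<and>
                                 (\<forall>x\<in>mcar X. p (s x) = x))"

text \<open>Every module in \<open>add M\<close> is isomorphic to one with carrier in \<open>nat \<Rightarrow> 'm\<close>
  (a summand of \<open>M^m\<close>), so it suffices to test against those.\<close>
definition incl_left_add_approx :: "'a ring \<Rightarrow> ('a, 'm) lmod \<Rightarrow> ('a, 'x) lmod \<Rightarrow> 'x set \<Rightarrow> bool" where
  "incl_left_add_approx A M W U \<longleftrightarrow> in_add A M W \<and> U \<subseteq> mcar W \<and>
     (\<forall>X :: ('a, nat \<Rightarrow> 'm) lmod. in_add A M X \<longrightarrow>
        (\<forall>h. lin A (submod W U) X h \<longrightarrow>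
           (\<exists>h'. lin A W X h' \<and> (\<forall>x\<in>U. h' x = h x))))"

text \<open>\<open>fadim_A M \<ge> k\<close>: an exact sequence \<open>0 \<rightarrow> A \<rightarrow>(f0) W 1 \<rightarrow>(f 1) W 2 \<rightarrow> \<dots> \<rightarrow>(f (k-1)) W k\<close>
  with \<open>W i \<in> add M\<close> and each \<open>Im \<rightarrow> W i\<close> a left \<open>add M\<close>-approximation.
  (All modules of \<open>add M\<close> are realised, up to isomorphism, with carriers in \<open>nat \<Rightarrow> 'm\<close>.)\<close>
definition fadim_ge :: "'a ring \<Rightarrow> ('a, 'm) lmod \<Rightarrow> nat \<Rightarrow> bool" where
  "fadim_ge A M k \<longleftrightarrow> k = 0 \<or>
     (\<exists>(W :: nat \<Rightarrow> ('a, nat \<Rightarrow> 'm) lmod) f0 f.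
        lin A (regmod A) (W 1) f0 \<and> inj_on f0 (carrier A) \<and>
        incl_left_add_approx A M (W 1) (f0 ` carrier A) \<and>
        (\<forall>i. 1 \<le> i \<and> i < k \<longrightarrow>
           lin A (W i) (W (Suc i)) (f i) \<and>
           mker (f i) (W i) (W (Suc i)) = (if i = 1 then f0 ` carrier A else f (i - 1) ` mcar (W (i - 1))) \<and>
           incl_left_add_approx A M (W (Suc i)) (f i ` mcar (W i))))"

definition fadim_infinite :: "'a ring \<Rightarrow> ('a, 'm) lmod \<Rightarrow> bool" where
  "fadim_infinite A M \<longleftrightarrow> (\<forall>k. fadim_ge A M k)"

definition wakamatsu_tilting :: "'a ring \<Rightarrow> ('a, 'm) lmod \<Rightarrow> bool" where
  "wakamatsu_tilting A M \<longleftrightarrow> is_lmod A M \<and> fin_gen A M \<and> ext_vanish A M M \<and> fadim_infinite A M"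

text \<open>\<open>pd_A M \<le> k\<close>, witnessed by a projective resolution
  \<open>0 \<rightarrow> P k \<rightarrow> \<dots> \<rightarrow> P 1 \<rightarrow>(d 0) P 0 \<rightarrow>(\<epsilon>) M \<rightarrow> 0\<close> whose modules have carriers in type \<open>'p\<close>.\<close>
definition pd_le :: "'a ring \<Rightarrow> ('a, 'm) lmod \<Rightarrow> nat \<Rightarrow> (nat \<Rightarrow> ('a, 'p) lmod) \<Rightarrow>
    (nat \<Rightarrow> 'p \<Rightarrow> 'p) \<Rightarrow> ('p \<Rightarrow> 'm) \<Rightarrow> bool" where
  "pd_le A M k P d \<epsilon> \<longleftrightarrow>
     (\<forall>i\<le>k. is_lmod A (P i) \<and> projective A (P i)) \<and>
     lin A (P 0) M \<epsilon> \<and> \<epsilon> ` mcar (P 0) = mcar M \<and>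
     (\<forall>i<k. lin A (P (Suc i)) (P i) (d i)) \<and>
     mker \<epsilon> (P 0) M = (if k = 0 then {mzero (P 0)} else d 0 ` mcar (P 1)) \<and>
     (\<forall>i<k. mker (d i) (P (Suc i)) (P i) =
            (if Suc i = k then {mzero (P (Suc i))} else d (Suc i) ` mcar (P (Suc (Suc i)))))"

text \<open>A right \<open>T\<close>-module \<open>M\<close> with \<open>T \<subseteq> End(M)\<close> acting on the right (\<open>m\<cdot>f = f m\<close>),
  viewed as a left module over the opposite ring.\<close>
definition right_end_mod :: "'a ring \<Rightarrow> ('a, 'm) lmod \<Rightarrow> ('m \<Rightarrow> 'm, 'm) lmod" where
  "right_end_mod A M = \<lparr>mcar = mcar M, madd = madd M, mzero = mzero M, msmul = (\<lambda>f x. f x)\<rparr>"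

text \<open>Free abelian group on \<open>S \<times> \<omega>\<close>: finitely supported integer-valued functions.\<close>
definition tfree :: "'s ring \<Rightarrow> ('r, 'w) lmod \<Rightarrow> ('s \<times> 'w \<Rightarrow> int) set" where
  "tfree S W = {g. finite {x. g x \<noteq> 0} \<and> (\<forall>s w. g (s, w) \<noteq> 0 \<longrightarrow> s \<in> carrier S \<and> w \<in> mcar W)}"

definition tdelta :: "'s \<Rightarrow> 'w \<Rightarrow> ('s \<times> 'w \<Rightarrow> int)" where
  "tdelta s w = (\<lambda>x. if x = (s, w) then 1 else 0)"

definition tgens :: "'r ring \<Rightarrow> 's ring \<Rightarrow> ('r \<Rightarrow> 's) \<Rightarrow> ('r, 'w) lmod \<Rightarrow> ('s \<times> 'w \<Rightarrow> int) set" where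
  "tgens R S l W =
     {(\<lambda>x. tdelta (s \<oplus>\<^bsub>S\<^esub> s') w x - tdelta s w x - tdelta s' w x) | s s' w.
         s \<in> carrier S \<and> s' \<in> carrier S \<and> w \<in> mcar W} \<union>
     {(\<lambda>x. tdelta s (madd W w w') x - tdelta s w x - tdelta s w' x) | s w w'.
         s \<in> carrier S \<and> w \<in> mcar W \<and> w' \<in> mcar W} \<union>
     {(\<lambda>x. tdelta (s \<otimes>\<^bsub>S\<^esub> l r) w x - tdelta s (msmul W r w) x) | s r w.
         s \<in> carrier S \<and> r \<in> carrier R \<and> w \<in> mcar W}"

inductive_set trel :: "'r ring \<Rightarrow> 's ring \<Rightarrow> ('r \<Rightarrow> 's) \<Rightarrow> ('r, 'w) lmod \<Rightarrow> ('s \<times> 'w \<Rightarrow> int) set"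
  for R S l W where
  trel_zero: "(\<lambda>x. 0) \<in> trel R S l W"
| trel_gen: "g \<in> tgens R S l W \<Longrightarrow> g \<in> trel R S l W"
| trel_diff: "g \<in> trel R S l W \<Longrightarrow> h \<in> trel R S l W \<Longrightarrow> (\<lambda>x. g x - h x) \<in> trel R S l W"

definition tcoset :: "('s \<times> 'w \<Rightarrow> int) set \<Rightarrow> ('s \<times> 'w \<Rightarrow> int) \<Rightarrow> ('s \<times> 'w \<Rightarrow> int) set" where
  "tcoset N g = {(\<lambda>x. g x + h x) | h. h \<in> N}"

text \<open>Left action of \<open>s \<in> S\<close> on the free group: \<open>(u,w) \<mapsto> (s u, w)\<close>.\<close>
definition tact_S :: "'s ring \<Rightarrow> 's \<Rightarrow> ('s \<times> 'w \<Rightarrow> int) \<Rightarrow> ('s \<times> 'w \<Rightarrow> int)" where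
  "tact_S S s g = (\<lambda>(t, w). \<Sum>u\<in>{u. g (u, w) \<noteq> 0 \<and> s \<otimes>\<^bsub>S\<^esub> u = t}. g (u, w))"

text \<open>Action of \<open>f \<in> End(\<omega>)\<close> on the free group: \<open>(s,w) \<mapsto> (s, f w)\<close>.\<close>
definition tact_W :: "('w \<Rightarrow> 'w) \<Rightarrow> ('s \<times> 'w \<Rightarrow> int) \<Rightarrow> ('s \<times> 'w \<Rightarrow> int)" where
  "tact_W f g = (\<lambda>(s, w'). \<Sum>w\<in>{w. g (s, w) \<noteq> 0 \<and> f w = w'}. g (s, w))"

text \<open>The left \<open>S\<close>-module \<open>S \<otimes>_R \<omega>\<close> (elements are cosets of the relation subgroup).\<close>
definition tensor_mod :: "'r ring \<Rightarrow> 's ring \<Rightarrow> ('r \<Rightarrow> 's) \<Rightarrow> ('r, 'w) lmod \<Rightarrow>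
    ('s, ('s \<times> 'w \<Rightarrow> int) set) lmod" where
  "tensor_mod R S l W =
    (let N = trel R S l W in
     \<lparr>mcar = {tcoset N g | g. g \<in> tfree S W},
      madd = (\<lambda>X Y. {(\<lambda>x. g x + h x) | g h. g \<in> X \<and> h \<in> Y}),
      mzero = N,
      msmul = (\<lambda>s X. {(\<lambda>x. tact_S S s g x + h x) | g h. g \<in> X \<and> h \<in> N})\<rparr>)"

definition tensor_rho :: "'r ring \<Rightarrow> 's ring \<Rightarrow> ('r \<Rightarrow> 's) \<Rightarrow> ('r, 'w) lmod \<Rightarrow>
    ('w \<Rightarrow> 'w) \<Rightarrow> ('s \<times> 'w \<Rightarrow> int) set \<Rightarrow> ('s \<times> 'w \<Rightarrow> int) set" where
  "tensor_rho R S l W f =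
    (\<lambda>X\<in>mcar (tensor_mod R S l W).
       {(\<lambda>x. tact_W f g x + h x) | g h. g \<in> X \<and> h \<in> trel R S l W})"

end

theory Submission
  imports Defs
begin

(* The centrally projective bimodule {}_R S_R is a summand of R^m with maps p, i; the elements
   c_j = p(e_j) (cbasis) commute with R, and the coordinates \<alpha>_j = (i -)_j (coord) are
   R-R-bilinear, so s = \<Sum> \<alpha>_j(s) c_j.  The Frobenius form E = \<psi>(1) (frob_form) identifies each
   \<alpha>_j with E(- x_j) for elements x_j (dbasis) commuting with R, and non-degeneracy of E gives
   s = \<Sum> x_j E(c_j s).  Tensoring with \<omega>, every Y in S \<otimes>_R \<omega> expands as \<Sum> c_j \<otimes> \<pi>_j(Y) and
   as \<Sum> x_j \<otimes> \<epsilon>(c_j Y), where \<pi>_j = \<alpha>_j \<otimes> \<omega> (proj) and \<epsilon> = E \<otimes> \<omega> (eps).  Right multiplication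
   by c_j or x_j is S-linear on S \<otimes>_R \<omega>, so the first expansion exhibits \<Gamma> as a summand of T^m
   as a left T-module, and the second shows that x \<mapsto> (y \<mapsto> (w \<mapsto> \<epsilon>(x(y(1 \<otimes> w))))) is a
   \<Gamma>-T-bimodule isomorphism from \<Gamma> onto Hom_T(\<Gamma>, T). *)

section \<open>Modules and their additive groups\<close>

definition add_grp :: "('a, 'm) lmod \<Rightarrow> 'm monoid" where
  "add_grp M = \<lparr>carrier = mcar M, mult = madd M, one = mzero M\<rparr>"

lemma add_grp_simps [simp]:
  "carrier (add_grp M) = mcar M" "mult (add_grp M) = madd M" "one (add_grp M) = mzero M"
  by (simp_all add: add_grp_def)

lemma is_lmodD:
  assumes "is_lmod A M"
  shows "ring A"
   "\<And>x y. x\<in>mcar M \<Longrightarrow> y\<in>mcar M \<Longrightarrow> madd M x y \<in> mcar M"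
   "\<And>x y z. x\<in>mcar M \<Longrightarrow> y\<in>mcar M \<Longrightarrow> z\<in>mcar M \<Longrightarrow> madd M (madd M x y) z = madd M x (madd M y z)"
   "\<And>x y. x\<in>mcar M \<Longrightarrow> y\<in>mcar M \<Longrightarrow> madd M x y = madd M y x"
   "mzero M \<in> mcar M"
   "\<And>x. x\<in>mcar M \<Longrightarrow> madd M (mzero M) x = x"
   "\<And>x. x\<in>mcar M \<Longrightarrow> \<exists>y\<in>mcar M. madd M x y = mzero M"
   "\<And>a x. a\<in>carrier A \<Longrightarrow> x\<in>mcar M \<Longrightarrow> msmul M a x \<in> mcar M"
   "\<And>a x y. a\<in>carrier A \<Longrightarrow> x\<in>mcar M \<Longrightarrow> y\<in>mcar M \<Longrightarrow> msmul M a (madd M x y) = madd M (msmul M a x) (msmul M a y)"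
   "\<And>a b x. a\<in>carrier A \<Longrightarrow> b\<in>carrier A \<Longrightarrow> x\<in>mcar M \<Longrightarrow> msmul M (a \<oplus>\<^bsub>A\<^esub> b) x = madd M (msmul M a x) (msmul M b x)"
   "\<And>a b x. a\<in>carrier A \<Longrightarrow> b\<in>carrier A \<Longrightarrow> x\<in>mcar M \<Longrightarrow> msmul M (a \<otimes>\<^bsub>A\<^esub> b) x = msmul M a (msmul M b x)"
   "\<And>x. x\<in>mcar M \<Longrightarrow> msmul M \<one>\<^bsub>A\<^esub> x = x"
  using assms unfolding is_lmod_def by auto

lemma lmod_comm_group:
  assumes "is_lmod A M"
  shows "comm_group (add_grp M)"
proof (rule comm_groupI, simp_all)
  note D = is_lmodD[OF assms]
  show "\<And>x. x\<in>mcar M \<Longrightarrow> \<exists>y\<in>mcar M. madd M y x = mzero M"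
    using D(7) D(4) by metis
qed (use is_lmodD[OF assms] in blast)+

locale lmodule =
  fixes A :: "'a ring" and M :: "('a, 'm) lmod"
  assumes lm: "is_lmod A M"
begin

sublocale R: ring A using is_lmodD(1)[OF lm] .
sublocale G: comm_group "add_grp M" using lmod_comm_group[OF lm] .

abbreviation "mneg x \<equiv> inv\<^bsub>add_grp M\<^esub> x"

lemma add_closed [simp, intro]: "x\<in>mcar M \<Longrightarrow> y\<in>mcar M \<Longrightarrow> madd M x y \<in> mcar M"
  using is_lmodD(2)[OF lm] by blast
lemma zero_closed [simp, intro]: "mzero M \<in> mcar M"
  using is_lmodD(5)[OF lm] by blast
lemma smul_closed [simp, intro]: "a\<in>carrier A \<Longrightarrow> x\<in>mcar M \<Longrightarrow> msmul M a x \<in> mcar M"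
  using is_lmodD(8)[OF lm] by blast
lemma neg_closed [simp, intro]: "x\<in>mcar M \<Longrightarrow> mneg x \<in> mcar M"
  using G.inv_closed by simp
lemma add_assoc: "x\<in>mcar M \<Longrightarrow> y\<in>mcar M \<Longrightarrow> z\<in>mcar M \<Longrightarrow> madd M (madd M x y) z = madd M x (madd M y z)"
  using is_lmodD(3)[OF lm] by blast
lemma add_comm: "x\<in>mcar M \<Longrightarrow> y\<in>mcar M \<Longrightarrow> madd M x y = madd M y x"
  using is_lmodD(4)[OF lm] by blast
lemma add_lcomm: "x\<in>mcar M \<Longrightarrow> y\<in>mcar M \<Longrightarrow> z\<in>mcar M \<Longrightarrow> madd M x (madd M y z) = madd M y (madd M x z)"
  by (metis add_assoc add_comm)
lemma zero_add [simp]: "x\<in>mcar M \<Longrightarrow> madd M (mzero M) x = x"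
  using is_lmodD(6)[OF lm] by blast
lemma add_zero [simp]: "x\<in>mcar M \<Longrightarrow> madd M x (mzero M) = x"
  using zero_add add_comm by simp
lemma neg_l [simp]: "x\<in>mcar M \<Longrightarrow> madd M (mneg x) x = mzero M"
  using G.l_inv by simp
lemma smul_add: "a\<in>carrier A \<Longrightarrow> x\<in>mcar M \<Longrightarrow> y\<in>mcar M \<Longrightarrow> msmul M a (madd M x y) = madd M (msmul M a x) (msmul M a y)"
  using is_lmodD(9)[OF lm] by blast
lemma add_smul: "a\<in>carrier A \<Longrightarrow> b\<in>carrier A \<Longrightarrow> x\<in>mcar M \<Longrightarrow> msmul M (a \<oplus>\<^bsub>A\<^esub> b) x = madd M (msmul M a x) (msmul M b x)"
  using is_lmodD(10)[OF lm] by blast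
lemma mult_smul: "a\<in>carrier A \<Longrightarrow> b\<in>carrier A \<Longrightarrow> x\<in>mcar M \<Longrightarrow> msmul M (a \<otimes>\<^bsub>A\<^esub> b) x = msmul M a (msmul M b x)"
  using is_lmodD(11)[OF lm] by blast

lemma smul_hom: "a \<in> carrier A \<Longrightarrow> msmul M a \<in> hom (add_grp M) (add_grp M)"
  by (rule homI) (auto simp: smul_add)

lemma smul_zero [simp]: "a\<in>carrier A \<Longrightarrow> msmul M a (mzero M) = mzero M"
  using group_hom.hom_one[of "add_grp M" "add_grp M" "msmul M a"] smul_hom
  by (simp add: group_hom_def group_hom_axioms_def G.is_group)

lemma smul_neg: "a\<in>carrier A \<Longrightarrow> x\<in>mcar M \<Longrightarrow> msmul M a (mneg x) = mneg (msmul M a x)"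
  using group_hom.hom_inv[of "add_grp M" "add_grp M" "msmul M a" x] smul_hom
  by (simp add: group_hom_def group_hom_axioms_def G.is_group)

lemma neg_add: "x\<in>mcar M \<Longrightarrow> y\<in>mcar M \<Longrightarrow> mneg (madd M x y) = madd M (mneg x) (mneg y)"
  using G.inv_mult by (simp add: add_comm)

end

lemma hom_finprod:
  assumes G: "comm_group G" and H: "comm_group H" and h: "h \<in> hom G H" and f: "f \<in> I \<rightarrow> carrier G"
  shows "h (finprod G f I) = finprod H (\<lambda>i. h (f i)) I"
proof -
  interpret G: comm_group G by (rule G)
  interpret H: comm_group H by (rule H)
  interpret group_hom G H h by (intro group_hom.intro group_hom_axioms.intro G.is_group H.is_group h)
  show ?thesis
    using f
  proof (induct I rule: infinite_finite_induct)
    case (insert i I)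
    then show ?case by (simp add: Pi_iff G.finprod_insert H.finprod_insert)
  qed simp_all
qed

lemma hom_mult_pointwise:
  assumes H: "comm_group H" and f: "f \<in> hom G H" and g: "g \<in> hom G H"
  shows "(\<lambda>x. f x \<otimes>\<^bsub>H\<^esub> g x) \<in> hom G H"
proof -
  interpret H: comm_group H by (rule H)
  show ?thesis using f g unfolding hom_def by (auto simp: Pi_iff H.m_ac)
qed

lemma hom_comp: "f \<in> hom G H \<Longrightarrow> g \<in> hom H K \<Longrightarrow> (\<lambda>x. g (f x)) \<in> hom G K"
  unfolding hom_def by (auto simp: Pi_iff)

lemma hom_finprod_pointwise:
  assumes H: "comm_group H" and G: "group G" and fin: "finite I" and f: "\<And>i. i \<in> I \<Longrightarrow> f i \<in> hom G H"
  shows "(\<lambda>x. finprod H (\<lambda>i. f i x) I) \<in> hom G H"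
  using fin f
proof (induct I rule: finite_induct)
  case empty
  interpret H: comm_group H by (rule H)
  show ?case by (rule homI) auto
next
  case (insert i I)
  interpret H: comm_group H by (rule H)
  have "(\<lambda>x. f i x \<otimes>\<^bsub>H\<^esub> finprod H (\<lambda>i. f i x) I) \<in> hom G H"
    using insert by (intro hom_mult_pointwise[OF H]) auto
  moreover have "\<And>x. x \<in> carrier G \<Longrightarrow> finprod H (\<lambda>i. f i x) (insert i I) = f i x \<otimes>\<^bsub>H\<^esub> finprod H (\<lambda>i. f i x) I"
    using insert by (intro H.finprod_insert) (auto simp: hom_def Pi_iff)
  ultimately show ?case unfolding hom_def by (auto simp: Pi_iff group.is_monoid[OF G] monoid.m_closed)
qed

lemma lin_hom: "lin A M N f \<Longrightarrow> f \<in> hom (add_grp M) (add_grp N)"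
  unfolding lin_def hom_def by auto

lemma lin_ext: "lin A M N f \<Longrightarrow> lin A M N g \<Longrightarrow> (\<And>x. x \<in> mcar M \<Longrightarrow> f x = g x) \<Longrightarrow> f = g"
  unfolding lin_def by (auto intro: extensionalityI)

lemma lin_closed: "lin A M N f \<Longrightarrow> x \<in> mcar M \<Longrightarrow> f x \<in> mcar N"
  unfolding lin_def by auto
lemma lin_add: "lin A M N f \<Longrightarrow> x \<in> mcar M \<Longrightarrow> y \<in> mcar M \<Longrightarrow> f (madd M x y) = madd N (f x) (f y)"
  unfolding lin_def by auto
lemma lin_smul: "lin A M N f \<Longrightarrow> a \<in> carrier A \<Longrightarrow> x \<in> mcar M \<Longrightarrow> f (msmul M a x) = msmul N a (f x)"
  unfolding lin_def by auto
lemma lin_extensional: "lin A M N f \<Longrightarrow> f \<in> extensional (mcar M)"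
  unfolding lin_def by auto

lemma linI:
  assumes "\<And>x. x \<in> mcar M \<Longrightarrow> f x \<in> mcar N" "\<And>x. x \<notin> mcar M \<Longrightarrow> f x = undefined"
    "\<And>x y. x \<in> mcar M \<Longrightarrow> y \<in> mcar M \<Longrightarrow> f (madd M x y) = madd N (f x) (f y)"
    "\<And>a x. a \<in> carrier A \<Longrightarrow> x \<in> mcar M \<Longrightarrow> f (msmul M a x) = msmul N a (f x)"
  shows "lin A M N f"
  unfolding lin_def extensional_def using assms by auto

context lmodule
begin

abbreviation "E \<equiv> endring A M"

lemma endring_simps:
  "carrier E = {f. lin A M M f}"
  "f \<otimes>\<^bsub>E\<^esub> g = (\<lambda>x\<in>mcar M. g (f x))"
  "\<one>\<^bsub>E\<^esub> = (\<lambda>x\<in>mcar M. x)"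
  "\<zero>\<^bsub>E\<^esub> = (\<lambda>x\<in>mcar M. mzero M)"
  "f \<oplus>\<^bsub>E\<^esub> g = (\<lambda>x\<in>mcar M. madd M (f x) (g x))"
  unfolding endring_def by simp_all

lemma lin_id: "lin A M M (\<lambda>x\<in>mcar M. x)"
  by (rule linI) auto

lemma lin_comp: "lin A M M f \<Longrightarrow> lin A M M g \<Longrightarrow> lin A M M (\<lambda>x\<in>mcar M. g (f x))"
  by (rule linI) (auto simp: lin_closed lin_add lin_smul)

lemma lin_addf: "lin A M M f \<Longrightarrow> lin A M M g \<Longrightarrow> lin A M M (\<lambda>x\<in>mcar M. madd M (f x) (g x))"
  by (rule linI) (auto simp: lin_closed lin_add lin_smul smul_add add_assoc add_lcomm)

lemma lin_zerof: "lin A M M (\<lambda>x\<in>mcar M. mzero M)"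
  by (rule linI) auto

lemma lin_negf: "lin A M M f \<Longrightarrow> lin A M M (\<lambda>x\<in>mcar M. mneg (f x))"
  by (rule linI) (auto simp: lin_closed lin_add lin_smul smul_neg neg_add)

lemma endring_abelian_group: "abelian_group E"
proof (rule abelian_groupI)
  show "\<And>x y. x \<in> carrier E \<Longrightarrow> y \<in> carrier E \<Longrightarrow> x \<oplus>\<^bsub>E\<^esub> y \<in> carrier E"
    "\<zero>\<^bsub>E\<^esub> \<in> carrier E"
    "\<And>x y z. x \<in> carrier E \<Longrightarrow> y \<in> carrier E \<Longrightarrow> z \<in> carrier E \<Longrightarrow> x \<oplus>\<^bsub>E\<^esub> y \<oplus>\<^bsub>E\<^esub> z = x \<oplus>\<^bsub>E\<^esub> (y \<oplus>\<^bsub>E\<^esub> z)"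
    "\<And>x y. x \<in> carrier E \<Longrightarrow> y \<in> carrier E \<Longrightarrow> x \<oplus>\<^bsub>E\<^esub> y = y \<oplus>\<^bsub>E\<^esub> x"
    "\<And>x. x \<in> carrier E \<Longrightarrow> \<zero>\<^bsub>E\<^esub> \<oplus>\<^bsub>E\<^esub> x = x"
    by (auto simp: endring_simps lin_addf lin_zerof lin_closed add_assoc add_comm add_lcomm
             intro!: restrict_ext extensionalityI[where A="mcar M"] dest: lin_extensional)
  show "\<exists>y\<in>carrier E. y \<oplus>\<^bsub>E\<^esub> f = \<zero>\<^bsub>E\<^esub>" if "f \<in> carrier E" for f
  proof
    have f: "lin A M M f" using that by (simp add: endring_simps)
    show "(\<lambda>x\<in>mcar M. mneg (f x)) \<in> carrier E" using lin_negf[OF f] by (simp add: endring_simps)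
    show "(\<lambda>x\<in>mcar M. mneg (f x)) \<oplus>\<^bsub>E\<^esub> f = \<zero>\<^bsub>E\<^esub>"
      unfolding endring_simps by (rule restrict_ext) (simp add: lin_closed[OF f])
  qed
qed

lemma endring_monoid: "monoid E"
  by (rule monoidI)
     (auto simp: endring_simps lin_comp lin_id lin_closed
           intro!: restrict_ext extensionalityI[where A="mcar M"] dest: lin_extensional)

lemma endring_ring: "ring E"
  by (rule ringI[OF endring_abelian_group endring_monoid])
     (auto simp: endring_simps lin_closed lin_add intro!: restrict_ext)

sublocale ER: ring E by (rule endring_ring)

lemma endring_finsum_eval:
  assumes f: "f \<in> I \<rightarrow> carrier E" and x: "x \<in> mcar M"
  shows "finsum E f I x = finprod (add_grp M) (\<lambda>i. f i x) I"
  using f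
proof (induct I rule: infinite_finite_induct)
  case (insert i I)
  have "finsum E f (insert i I) = f i \<oplus>\<^bsub>E\<^esub> finsum E f I"
    using insert by (intro ER.finsum_insert) auto
  moreover have "finprod (add_grp M) (\<lambda>i. f i x) (insert i I) = madd M (f i x) (finprod (add_grp M) (\<lambda>i. f i x) I)"
    using insert x by (subst G.finprod_insert) (auto simp: Pi_iff endring_simps lin_closed)
  ultimately show ?case using insert x by (simp add: endring_simps)
qed (use x in \<open>simp_all add: ER.finsum_infinite endring_simps\<close>)

end

definition unit_vec :: "'a ring \<Rightarrow> nat \<Rightarrow> nat \<Rightarrow> (nat \<Rightarrow> 'a)" where
  "unit_vec A n j = (\<lambda>k. if k < n then (if k = j then \<one>\<^bsub>A\<^esub> else \<zero>\<^bsub>A\<^esub>) else \<zero>\<^bsub>A\<^esub>)"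

lemma freemod_simps:
  "mcar (freemod A n) = {v. (\<forall>i<n. v i \<in> carrier A) \<and> (\<forall>i\<ge>n. v i = \<zero>\<^bsub>A\<^esub>)}"
  "madd (freemod A n) = (\<lambda>v w i. if i < n then v i \<oplus>\<^bsub>A\<^esub> w i else \<zero>\<^bsub>A\<^esub>)"
  "msmul (freemod A n) = (\<lambda>a v i. if i < n then a \<otimes>\<^bsub>A\<^esub> v i else \<zero>\<^bsub>A\<^esub>)"
  unfolding freemod_def by simp_all

lemma freemod_lmod:
  fixes R :: "'a ring"
  assumes R: "ring R"
  shows "is_lmod R (freemod R n)"
proof -
  interpret ring R by (rule R)
  show ?thesis
  unfolding is_lmod_def freemod_def
  apply (simp add: ring_axioms)
  apply (intro conjI allI impI ballI)
  apply (auto simp: a_assoc r_distr l_distr m_assoc)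
  apply (rule ext, simp add: a_comm)
  subgoal for x
    by (rule exI[of _ "\<lambda>i. if i < n then \<ominus>\<^bsub>R\<^esub> x i else \<zero>\<^bsub>R\<^esub>"]) (auto simp: r_neg)
  done
qed

lemma unit_vec_mem: "ring R \<Longrightarrow> unit_vec R n j \<in> mcar (freemod R n)"
  unfolding unit_vec_def freemod_def by (auto intro: ring.ring_simprules)

lemma freemod_finprod_eval:
  fixes R :: "'a ring"
  assumes R: "ring R" and g: "g \<in> I \<rightarrow> mcar (freemod R n)" and k: "k < n"
  shows "finprod (add_grp (freemod R n)) g I k = finsum R (\<lambda>j. g j k) I"
proof -
  interpret ring R by (rule R)
  interpret F: comm_group "add_grp (freemod R n)" by (rule lmod_comm_group[OF freemod_lmod[OF R]])
  show ?thesis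
    using g
  proof (induct I rule: infinite_finite_induct)
    case (insert i I)
    have "finprod (add_grp (freemod R n)) g (insert i I) = madd (freemod R n) (g i) (finprod (add_grp (freemod R n)) g I)"
      using insert by (subst F.finprod_insert) auto
    moreover have "finsum R (\<lambda>j. g j k) (insert i I) = g i k \<oplus>\<^bsub>R\<^esub> finsum R (\<lambda>j. g j k) I"
      using insert k by (subst finsum_insert) (auto simp: freemod_def Pi_iff)
    ultimately show ?case using insert k by (simp add: freemod_def)
  next
    case (infinite I)
    have "finprod (add_grp (freemod R n)) g I = mzero (freemod R n)" using infinite by (simp add: F.finprod_infinite)
    then show ?case using infinite by (simp add: finsum_infinite freemod_def)
  next
    case empty
    have "finprod (add_grp (freemod R n)) g {} = mzero (freemod R n)" by simp
    then show ?case by (simp add: freemod_def)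
  qed
qed

lemma freemod_decomp:
  fixes R :: "'a ring"
  assumes R: "ring R" and v: "v \<in> mcar (freemod R n)"
  shows "v = finprod (add_grp (freemod R n)) (\<lambda>j. msmul (freemod R n) (v j) (unit_vec R n j)) {..<n}"
    (is "v = ?sum")
proof
  interpret ring R by (rule R)
  interpret F: lmodule R "freemod R n" by (rule lmodule.intro[OF freemod_lmod[OF R]])
  have vc: "\<And>j. j < n \<Longrightarrow> v j \<in> carrier R" using v by (simp add: freemod_def)
  have fc: "(\<lambda>j. msmul (freemod R n) (v j) (unit_vec R n j)) \<in> {..<n} \<rightarrow> mcar (freemod R n)"
    using vc unit_vec_mem[OF R] by auto
  fix k
  show "v k = ?sum k"
  proof (cases "k < n")
    case True
    have "?sum k = finsum R (\<lambda>j. msmul (freemod R n) (v j) (unit_vec R n j) k) {..<n}"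
      by (rule freemod_finprod_eval[OF R fc True])
    also have "\<dots> = finsum R (\<lambda>j. if k = j then v j else \<zero>\<^bsub>R\<^esub>) {..<n}"
      using True vc by (intro finsum_cong') (auto simp: freemod_def unit_vec_def)
    also have "\<dots> = v k" using True vc by (subst add.finprod_singleton) auto
    finally show ?thesis by simp
  next
    case False
    have "?sum \<in> mcar (freemod R n)" using F.G.finprod_closed fc by simp
    then show ?thesis using False v by (simp add: freemod_def)
  qed
qed

lemma lin_freemod_decomp:
  fixes R :: "'a ring"
  assumes R: "ring R" and N: "is_lmod R N" and f: "lin R (freemod R n) N f" and v: "v \<in> mcar (freemod R n)"
  shows "f v = finprod (add_grp N) (\<lambda>j. msmul N (v j) (f (unit_vec R n j))) {..<n}"
proof -
  interpret ring R by (rule R)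
  interpret F: lmodule R "freemod R n" by (rule lmodule.intro[OF freemod_lmod[OF R]])
  interpret N: lmodule R N by (rule lmodule.intro[OF N])
  have vc: "\<And>j. j < n \<Longrightarrow> v j \<in> carrier R" using v by (simp add: freemod_def)
  have "f v = finprod (add_grp N) (\<lambda>j. f (msmul (freemod R n) (v j) (unit_vec R n j))) {..<n}"
    by (subst freemod_decomp[OF R v], rule hom_finprod[OF F.G.comm_group_axioms N.G.comm_group_axioms lin_hom[OF f]])
       (use vc unit_vec_mem[OF R] in auto)
  also have "\<dots> = finprod (add_grp N) (\<lambda>j. msmul N (v j) (f (unit_vec R n j))) {..<n}"
    using vc unit_vec_mem[OF R] by (intro N.G.finprod_cong') (auto simp: lin_smul[OF f] lin_closed[OF f])
  finally show ?thesis .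
qed

lemma restr_mod_simps [simp]:
  "mcar (restr_mod A B l) = carrier B"
  "madd (restr_mod A B l) = (\<lambda>x y. x \<oplus>\<^bsub>B\<^esub> y)"
  "mzero (restr_mod A B l) = \<zero>\<^bsub>B\<^esub>"
  "msmul (restr_mod A B l) = (\<lambda>a x. l a \<otimes>\<^bsub>B\<^esub> x)"
  unfolding restr_mod_def by simp_all

lemma regmod_simps [simp]:
  "mcar (regmod A) = carrier A"
  "madd (regmod A) = (\<lambda>x y. x \<oplus>\<^bsub>A\<^esub> y)"
  "mzero (regmod A) = \<zero>\<^bsub>A\<^esub>"
  "msmul (regmod A) = (\<lambda>a x. a \<otimes>\<^bsub>A\<^esub> x)"
  unfolding regmod_def by simp_all

lemma add_grp_restr_mod: "add_grp (restr_mod A B l) = add_monoid B"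
  unfolding add_grp_def restr_mod_def by simp

lemma add_grp_regmod: "add_grp (regmod A) = add_monoid A"
  unfolding add_grp_def regmod_def by simp

lemma restr_lmod:
  assumes A: "ring A" and B: "ring B" and h: "l \<in> ring_hom A B"
  shows "is_lmod A (restr_mod A B l)"
proof -
  interpret A: ring A by (rule A)
  interpret B: ring B by (rule B)
  have lc: "\<And>a. a \<in> carrier A \<Longrightarrow> l a \<in> carrier B"
    and la: "\<And>a b. a \<in> carrier A \<Longrightarrow> b \<in> carrier A \<Longrightarrow> l (a \<oplus>\<^bsub>A\<^esub> b) = l a \<oplus>\<^bsub>B\<^esub> l b"
    and lm: "\<And>a b. a \<in> carrier A \<Longrightarrow> b \<in> carrier A \<Longrightarrow> l (a \<otimes>\<^bsub>A\<^esub> b) = l a \<otimes>\<^bsub>B\<^esub> l b"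
    and l1: "l \<one>\<^bsub>A\<^esub> = \<one>\<^bsub>B\<^esub>"
    using h by (auto simp: ring_hom_def)
  have "\<forall>x\<in>carrier B. \<exists>y\<in>carrier B. x \<oplus>\<^bsub>B\<^esub> y = \<zero>\<^bsub>B\<^esub>"
    using B.r_neg B.a_inv_closed by blast
  then show ?thesis unfolding is_lmod_def
    by (auto simp: A B lc la lm l1 B.a_ac B.r_distr B.l_distr B.m_assoc)
qed

lemma lin_restr_regmod_finsum:
  assumes A: "ring A" and B: "ring B" and h: "l \<in> ring_hom A B"
    and \<phi>: "lin A (restr_mod A B l) (regmod A) \<phi>" and f: "f \<in> I \<rightarrow> carrier B"
  shows "\<phi> (finsum B f I) = finsum A (\<lambda>i. \<phi> (f i)) I"
proof -
  have "comm_group (add_grp (restr_mod A B l))" by (rule lmod_comm_group[OF restr_lmod[OF A B h]])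
  moreover have "comm_group (add_grp (regmod A))"
    using abelian_group.a_comm_group[OF ring.is_abelian_group[OF A]] by (simp add: add_grp_regmod)
  ultimately have "\<phi> (finprod (add_grp (restr_mod A B l)) f I) = finprod (add_grp (regmod A)) (\<lambda>i. \<phi> (f i)) I"
    using f by (intro hom_finprod lin_hom[OF \<phi>]) simp_all
  then show ?thesis by (simp add: add_grp_restr_mod add_grp_regmod finsum_def)
qed

section \<open>Finitely supported integer functions\<close>

definition supp :: "('x \<Rightarrow> int) \<Rightarrow> 'x set" where "supp g = {x. g x \<noteq> 0}"

definition delta :: "'x \<Rightarrow> 'x \<Rightarrow> int" where "delta a = (\<lambda>x. if x = a then 1 else 0)"

definition push :: "('x \<Rightarrow> 'y) \<Rightarrow> ('x \<Rightarrow> int) \<Rightarrow> ('y \<Rightarrow> int)" where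
  "push \<phi> g = (\<lambda>y. \<Sum>x\<in>{x. g x \<noteq> 0 \<and> \<phi> x = y}. g x)"

lemma push_eq_sum:
  assumes "finite U" "supp g \<subseteq> U"
  shows "push \<phi> g y = (\<Sum>x\<in>{x\<in>U. \<phi> x = y}. g x)"
  unfolding push_def
  by (rule sum.mono_neutral_left) (use assms in \<open>auto simp: supp_def\<close>)

lemma push_add:
  assumes "finite (supp g)" "finite (supp h)"
  shows "push \<phi> (\<lambda>x. g x + h x) = (\<lambda>y. push \<phi> g y + push \<phi> h y)"
proof
  fix y
  have "supp (\<lambda>x. g x + h x) \<subseteq> supp g \<union> supp h" by (auto simp: supp_def)
  then show "push \<phi> (\<lambda>x. g x + h x) y = push \<phi> g y + push \<phi> h y"
    using assms by (simp add: push_eq_sum[of "supp g \<union> supp h"] sum.distrib)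
qed

lemma push_diff:
  assumes "finite (supp g)" "finite (supp h)"
  shows "push \<phi> (\<lambda>x. g x - h x) = (\<lambda>y. push \<phi> g y - push \<phi> h y)"
proof
  fix y
  have "supp (\<lambda>x. g x - h x) \<subseteq> supp g \<union> supp h" by (auto simp: supp_def)
  then show "push \<phi> (\<lambda>x. g x - h x) y = push \<phi> g y - push \<phi> h y"
    using assms by (simp add: push_eq_sum[of "supp g \<union> supp h"] sum_subtractf)
qed

lemma push_zero: "push \<phi> (\<lambda>x. 0) = (\<lambda>y. 0)"
  unfolding push_def by simp

lemma delta_self [simp]: "delta a a = 1"
  by (simp add: delta_def)

lemma supp_delta [simp]: "supp (delta a) = {a}"
  unfolding supp_def delta_def by auto

lemma push_delta: "push \<phi> (delta a) = delta (\<phi> a)"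
proof
  fix y
  have "push \<phi> (delta a) y = (\<Sum>x\<in>{x\<in>{a}. \<phi> x = y}. delta a x)"
    by (rule push_eq_sum) auto
  moreover have "{x\<in>{a}. \<phi> x = y} = (if \<phi> a = y then {a} else {})" by auto
  ultimately show "push \<phi> (delta a) y = delta (\<phi> a) y"
    by (auto simp: delta_def)
qed

lemma push_delta_diff2: "push \<phi> (\<lambda>x. delta a x - delta b x) = (\<lambda>x. delta (\<phi> a) x - delta (\<phi> b) x)"
  by (simp add: push_diff push_delta)

lemma push_delta_diff3:
  "push \<phi> (\<lambda>x. delta a x - delta b x - delta c x) = (\<lambda>x. delta (\<phi> a) x - delta (\<phi> b) x - delta (\<phi> c) x)"
proof -
  have "finite (supp (\<lambda>x. delta a x - delta b x))"
    by (rule finite_subset[of _ "{a, b}"]) (auto simp: supp_def delta_def)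
  then show ?thesis by (simp add: push_diff push_delta_diff2 push_delta)
qed

lemma supp_push: "finite (supp g) \<Longrightarrow> supp (push \<phi> g) \<subseteq> \<phi> ` supp g"
proof
  fix y assume "y \<in> supp (push \<phi> g)"
  then have "(\<Sum>x\<in>{x. g x \<noteq> 0 \<and> \<phi> x = y}. g x) \<noteq> 0" by (simp add: supp_def push_def)
  then obtain x where "x \<in> {x. g x \<noteq> 0 \<and> \<phi> x = y}" by (meson sum.neutral)
  then show "y \<in> \<phi> ` supp g" by (auto simp: supp_def)
qed

lemma finite_supp_push: "finite (supp g) \<Longrightarrow> finite (supp (push \<phi> g))"
  by (rule finite_subset[OF supp_push finite_imageI])

lemma tact_S_push: "tact_S S s g = push (map_prod (\<lambda>u. s \<otimes>\<^bsub>S\<^esub> u) id) g"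
proof
  fix y :: "'a \<times> 'b"
  obtain t w where y: "y = (t, w)" by (cases y)
  have "(\<Sum>u\<in>{u. g (u, w) \<noteq> 0 \<and> s \<otimes>\<^bsub>S\<^esub> u = t}. g (u, w)) =
        (\<Sum>x\<in>(\<lambda>u. (u, w)) ` {u. g (u, w) \<noteq> 0 \<and> s \<otimes>\<^bsub>S\<^esub> u = t}. g x)"
    by (subst sum.reindex) (auto simp: inj_on_def)
  also have "(\<lambda>u. (u, w)) ` {u. g (u, w) \<noteq> 0 \<and> s \<otimes>\<^bsub>S\<^esub> u = t} =
       {x. g x \<noteq> 0 \<and> map_prod (\<lambda>u. s \<otimes>\<^bsub>S\<^esub> u) id x = (t, w)}"
    by auto
  finally show "tact_S S s g y = push (map_prod (\<lambda>u. s \<otimes>\<^bsub>S\<^esub> u) id) g y"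
    unfolding tact_S_def push_def y by simp
qed

lemma tact_W_push: "tact_W f g = push (map_prod id f) g"
proof
  fix y :: "'a \<times> 'b"
  obtain s w' where y: "y = (s, w')" by (cases y)
  have "(\<Sum>w\<in>{w. g (s, w) \<noteq> 0 \<and> f w = w'}. g (s, w)) =
        (\<Sum>x\<in>(\<lambda>w. (s, w)) ` {w. g (s, w) \<noteq> 0 \<and> f w = w'}. g x)"
    by (subst sum.reindex) (auto simp: inj_on_def)
  also have "(\<lambda>w. (s, w)) ` {w. g (s, w) \<noteq> 0 \<and> f w = w'} = {x. g x \<noteq> 0 \<and> map_prod id f x = (s, w')}"
    by auto
  finally show "tact_W f g y = push (map_prod id f) g y"
    unfolding tact_W_def push_def y by simp
qed

definition int_subgroup :: "('x \<Rightarrow> int) set \<Rightarrow> bool" where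
  "int_subgroup N \<longleftrightarrow> (\<lambda>x. 0) \<in> N \<and> (\<forall>g\<in>N. \<forall>h\<in>N. (\<lambda>x. g x - h x) \<in> N)"

lemma int_subgroup_zero: "int_subgroup N \<Longrightarrow> (\<lambda>x. 0) \<in> N"
  unfolding int_subgroup_def by blast

lemma int_subgroup_diff: "int_subgroup N \<Longrightarrow> g\<in>N \<Longrightarrow> h\<in>N \<Longrightarrow> (\<lambda>x. g x - h x) \<in> N"
  unfolding int_subgroup_def by blast

lemma int_subgroup_add:
  assumes N: "int_subgroup N" and g: "g\<in>N" and h: "h\<in>N"
  shows "(\<lambda>x. g x + h x) \<in> N"
proof -
  have "(\<lambda>x. 0 - h x) \<in> N" using int_subgroup_diff[OF N int_subgroup_zero[OF N] h] .
  from int_subgroup_diff[OF N g this] show ?thesis by simp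
qed

lemma tcoset_eq: "tcoset N g = {f. (\<lambda>x. f x - g x) \<in> N}"
proof (intro Set.set_eqI iffI)
  fix f assume "f \<in> {f. (\<lambda>x. f x - g x) \<in> N}"
  then show "f \<in> tcoset N g"
    unfolding tcoset_def by (intro CollectI exI[of _ "\<lambda>x. f x - g x"]) auto
qed (auto simp: tcoset_def)

lemma tcoset_self: "int_subgroup N \<Longrightarrow> g \<in> tcoset N g"
  by (simp add: tcoset_eq int_subgroup_zero)

lemma tcoset_eq_iff:
  assumes N: "int_subgroup N"
  shows "tcoset N g = tcoset N h \<longleftrightarrow> (\<lambda>x. g x - h x) \<in> N"
proof
  assume "tcoset N g = tcoset N h"
  then show "(\<lambda>x. g x - h x) \<in> N" using tcoset_self[OF N, of g] by (simp add: tcoset_eq)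
next
  assume d: "(\<lambda>x. g x - h x) \<in> N"
  have "(\<lambda>x. f x - g x) \<in> N \<longleftrightarrow> (\<lambda>x. f x - h x) \<in> N" for f
  proof
    assume "(\<lambda>x. f x - g x) \<in> N"
    from int_subgroup_add[OF N this d] show "(\<lambda>x. f x - h x) \<in> N" by simp
  next
    assume "(\<lambda>x. f x - h x) \<in> N"
    from int_subgroup_diff[OF N this d] show "(\<lambda>x. f x - g x) \<in> N" by simp
  qed
  then show "tcoset N g = tcoset N h" by (simp add: tcoset_eq)
qed

lemma tcoset_add:
  assumes N: "int_subgroup N"
  shows "{(\<lambda>x. g' x + h' x) | g' h'. g' \<in> tcoset N g \<and> h' \<in> tcoset N h} = tcoset N (\<lambda>x. g x + h x)"
proof (intro Set.set_eqI iffI)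
  fix f assume "f \<in> {(\<lambda>x. g' x + h' x) | g' h'. g' \<in> tcoset N g \<and> h' \<in> tcoset N h}"
  then obtain g' h' where f: "f = (\<lambda>x. g' x + h' x)" and g': "(\<lambda>x. g' x - g x) \<in> N" and h': "(\<lambda>x. h' x - h x) \<in> N"
    by (auto simp: tcoset_eq)
  have "(\<lambda>x. f x - (g x + h x)) = (\<lambda>x. (g' x - g x) + (h' x - h x))" using f by auto
  then show "f \<in> tcoset N (\<lambda>x. g x + h x)" using int_subgroup_add[OF N g' h'] by (simp add: tcoset_eq)
next
  fix f assume "f \<in> tcoset N (\<lambda>x. g x + h x)"
  then have "(\<lambda>x. f x - h x) \<in> tcoset N g" by (simp add: tcoset_eq algebra_simps)
  with tcoset_self[OF N, of h]
  show "f \<in> {(\<lambda>x. g' x + h' x) | g' h'. g' \<in> tcoset N g \<and> h' \<in> tcoset N h}"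
    by (intro CollectI exI[of _ "\<lambda>x. f x - h x"] exI[of _ h]) auto
qed

lemma tcoset_zero: "tcoset N (\<lambda>x. 0) = N"
  by (simp add: tcoset_eq)

section \<open>The tensor product \<open>S \<otimes>\<^sub>R \<omega>\<close>\<close>

locale tensor_setting =
  fixes R :: "'r ring" and S :: "'s ring" and l :: "'r \<Rightarrow> 's" and W :: "('r, 'w) lmod"
  assumes ringS: "ring S" and lhom: "l \<in> ring_hom R S" and Wm: "is_lmod R W"
begin

sublocale W: lmodule R W by (rule lmodule.intro[OF Wm])
sublocale S: ring S by (rule ringS)

abbreviation "N \<equiv> trel R S l W"
abbreviation "TF \<equiv> tfree S W"
abbreviation "TM \<equiv> tensor_mod R S l W"
abbreviation "tensor s w \<equiv> tcoset N (delta (s, w))"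

lemma l_closed [simp, intro]: "r \<in> carrier R \<Longrightarrow> l r \<in> carrier S"
  using lhom by (simp add: ring_hom_def Pi_iff)
lemma l_one [simp]: "l \<one>\<^bsub>R\<^esub> = \<one>\<^bsub>S\<^esub>"
  using lhom by (simp add: ring_hom_def)

lemma tfree_iff: "g \<in> TF \<longleftrightarrow> finite (supp g) \<and> supp g \<subseteq> carrier S \<times> mcar W"
  unfolding tfree_def supp_def by auto

lemma tfree_zero [simp, intro]: "(\<lambda>x. 0) \<in> TF"
  by (simp add: tfree_iff supp_def)

lemma tfree_add [intro]: "g \<in> TF \<Longrightarrow> h \<in> TF \<Longrightarrow> (\<lambda>x. g x + h x) \<in> TF"
proof -
  assume "g \<in> TF" "h \<in> TF"
  moreover have "supp (\<lambda>x. g x + h x) \<subseteq> supp g \<union> supp h" by (auto simp: supp_def)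
  ultimately show ?thesis unfolding tfree_iff by (meson finite_Un le_sup_iff rev_finite_subset subset_trans)
qed

lemma tfree_diff [intro]: "g \<in> TF \<Longrightarrow> h \<in> TF \<Longrightarrow> (\<lambda>x. g x - h x) \<in> TF"
proof -
  assume "g \<in> TF" "h \<in> TF"
  moreover have "supp (\<lambda>x. g x - h x) \<subseteq> supp g \<union> supp h" by (auto simp: supp_def)
  ultimately show ?thesis unfolding tfree_iff by (meson finite_Un le_sup_iff rev_finite_subset subset_trans)
qed

lemma tfree_neg [intro]: "g \<in> TF \<Longrightarrow> (\<lambda>x. - g x) \<in> TF"
  using tfree_diff[of "\<lambda>x. 0" g] by simp

lemma tfree_smult: "g \<in> TF \<Longrightarrow> (\<lambda>x. (n::int) * g x) \<in> TF"
  unfolding tfree_iff supp_def by (auto elim: rev_finite_subset)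

lemma tfree_delta [intro]: "a \<in> carrier S \<times> mcar W \<Longrightarrow> delta a \<in> TF"
  by (simp add: tfree_iff)

lemma tgens_cases:
  assumes "g \<in> tgens R S l W"
  obtains (add_left) s s' w where "g = (\<lambda>x. delta (s \<oplus>\<^bsub>S\<^esub> s', w) x - delta (s, w) x - delta (s', w) x)"
      "s \<in> carrier S" "s' \<in> carrier S" "w \<in> mcar W"
  | (add_right) s w w' where "g = (\<lambda>x. delta (s, madd W w w') x - delta (s, w) x - delta (s, w') x)"
      "s \<in> carrier S" "w \<in> mcar W" "w' \<in> mcar W"
  | (balanced) s r w where "g = (\<lambda>x. delta (s \<otimes>\<^bsub>S\<^esub> l r, w) x - delta (s, msmul W r w) x)"
      "s \<in> carrier S" "r \<in> carrier R" "w \<in> mcar W"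
  using assms unfolding tgens_def tdelta_def delta_def by blast

lemma rel_add_left: "s \<in> carrier S \<Longrightarrow> s' \<in> carrier S \<Longrightarrow> w \<in> mcar W \<Longrightarrow>
    (\<lambda>x. delta (s \<oplus>\<^bsub>S\<^esub> s', w) x - delta (s, w) x - delta (s', w) x) \<in> N"
  by (rule trel_gen) (unfold tgens_def tdelta_def delta_def, blast)

lemma rel_add_right: "s \<in> carrier S \<Longrightarrow> w \<in> mcar W \<Longrightarrow> w' \<in> mcar W \<Longrightarrow>
    (\<lambda>x. delta (s, madd W w w') x - delta (s, w) x - delta (s, w') x) \<in> N"
  by (rule trel_gen) (unfold tgens_def tdelta_def delta_def, blast)

lemma rel_balanced: "s \<in> carrier S \<Longrightarrow> r \<in> carrier R \<Longrightarrow> w \<in> mcar W \<Longrightarrow>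
    (\<lambda>x. delta (s \<otimes>\<^bsub>S\<^esub> l r, w) x - delta (s, msmul W r w) x) \<in> N"
  by (rule trel_gen) (unfold tgens_def tdelta_def delta_def, blast)

lemma trel_tfree: "g \<in> N \<Longrightarrow> g \<in> TF"
proof (induct rule: trel.induct)
  case (trel_gen g)
  then show ?case by (cases rule: tgens_cases) (auto intro!: tfree_diff tfree_delta)
qed auto

lemma trel_int_subgroup: "int_subgroup N"
  unfolding int_subgroup_def by (auto intro: trel.intros)

lemma trel_add: "g \<in> N \<Longrightarrow> h \<in> N \<Longrightarrow> (\<lambda>x. g x + h x) \<in> N"
  by (rule int_subgroup_add[OF trel_int_subgroup])

definition tensor_compatible :: "('s \<Rightarrow> 's) \<Rightarrow> ('w \<Rightarrow> 'w) \<Rightarrow> bool" where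
  "tensor_compatible a b \<longleftrightarrow>
     (\<forall>s\<in>carrier S. a s \<in> carrier S) \<and> (\<forall>w\<in>mcar W. b w \<in> mcar W) \<and>
     (\<forall>s\<in>carrier S. \<forall>s'\<in>carrier S. a (s \<oplus>\<^bsub>S\<^esub> s') = a s \<oplus>\<^bsub>S\<^esub> a s') \<and>
     (\<forall>w\<in>mcar W. \<forall>w'\<in>mcar W. b (madd W w w') = madd W (b w) (b w')) \<and>
     (\<forall>s\<in>carrier S. \<forall>r\<in>carrier R. a (s \<otimes>\<^bsub>S\<^esub> l r) = a s \<otimes>\<^bsub>S\<^esub> l r) \<and>
     (\<forall>r\<in>carrier R. \<forall>w\<in>mcar W. b (msmul W r w) = msmul W r (b w))"

lemma tensor_compatible_smul: "s \<in> carrier S \<Longrightarrow> tensor_compatible (\<lambda>u. s \<otimes>\<^bsub>S\<^esub> u) id"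
  by (simp add: tensor_compatible_def S.r_distr S.m_assoc)

lemma tensor_compatible_endo: "lin R W W f \<Longrightarrow> tensor_compatible id f"
  by (simp add: tensor_compatible_def lin_closed lin_add lin_smul)

lemma compatible_map_prod_closed:
  "tensor_compatible a b \<Longrightarrow> x \<in> carrier S \<times> mcar W \<Longrightarrow> map_prod a b x \<in> carrier S \<times> mcar W"
  by (auto simp: tensor_compatible_def)

lemma push_map_prod_tfree:
  assumes ab: "tensor_compatible a b" and g: "g \<in> TF"
  shows "push (map_prod a b) g \<in> TF"
proof -
  have fin: "finite (supp g)" and sub: "supp g \<subseteq> carrier S \<times> mcar W" using g by (simp_all add: tfree_iff)
  have "map_prod a b ` supp g \<subseteq> carrier S \<times> mcar W"
    using compatible_map_prod_closed[OF ab] sub by (intro image_subsetI) auto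
  then have "supp (push (map_prod a b) g) \<subseteq> carrier S \<times> mcar W"
    by (rule subset_trans[OF supp_push[OF fin]])
  then show ?thesis unfolding tfree_iff using finite_supp_push[OF fin] by simp
qed

lemma push_map_prod_tgens:
  assumes ab: "tensor_compatible a b" and g: "g \<in> tgens R S l W"
  shows "push (map_prod a b) g \<in> N"
  using g
proof (cases rule: tgens_cases)
  case (add_left s s' w)
  then show ?thesis using ab by (auto simp: tensor_compatible_def push_delta_diff3 intro!: rel_add_left)
next
  case (add_right s w w')
  then show ?thesis using ab by (auto simp: tensor_compatible_def push_delta_diff3 intro!: rel_add_right)
next
  case (balanced s r w)
  then show ?thesis using ab by (auto simp: tensor_compatible_def push_delta_diff2 intro!: rel_balanced)
qed

lemma push_map_prod_trel:
  assumes ab: "tensor_compatible a b"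
  shows "g \<in> N \<Longrightarrow> push (map_prod a b) g \<in> N"
proof (induct rule: trel.induct)
  case trel_zero then show ?case by (simp add: push_zero trel.trel_zero)
next
  case (trel_gen g) then show ?case by (rule push_map_prod_tgens[OF ab])
next
  case (trel_diff g h)
  then have "finite (supp g)" "finite (supp h)" using trel_tfree tfree_iff by blast+
  then show ?case using trel_diff by (simp add: push_diff trel.trel_diff)
qed

text \<open>This is the shape of the scalar action in \<^const>\<open>tensor_mod\<close> and of \<^const>\<open>tensor_rho\<close>.\<close>
definition induced :: "('s \<times> 'w \<Rightarrow> 's \<times> 'w) \<Rightarrow> ('s \<times> 'w \<Rightarrow> int) set \<Rightarrow> ('s \<times> 'w \<Rightarrow> int) set" where
  "induced \<phi> X = {(\<lambda>x. push \<phi> g x + h x) | g h. g \<in> X \<and> h \<in> N}"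

lemma induced_coset:
  assumes ab: "tensor_compatible a b" and g: "g \<in> TF"
  shows "induced (map_prod a b) (tcoset N g) = tcoset N (push (map_prod a b) g)"
    (is "induced ?\<phi> _ = _")
proof (intro Set.set_eqI iffI)
  fix f assume "f \<in> induced ?\<phi> (tcoset N g)"
  then obtain g' h where f: "f = (\<lambda>x. push ?\<phi> g' x + h x)" and g': "(\<lambda>x. g' x - g x) \<in> N" and h: "h \<in> N"
    by (auto simp: induced_def tcoset_eq)
  have fg: "finite (supp g)" using g tfree_iff by blast
  have "finite (supp (\<lambda>x. g' x - g x))" using g' trel_tfree tfree_iff by blast
  moreover have "supp g' \<subseteq> supp (\<lambda>x. g' x - g x) \<union> supp g" by (auto simp: supp_def)
  ultimately have fg': "finite (supp g')" using fg by (meson finite_Un rev_finite_subset)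
  have "(\<lambda>y. push ?\<phi> g' y - push ?\<phi> g y) \<in> N"
    using push_map_prod_trel[OF ab g'] by (simp add: push_diff[OF fg' fg])
  from trel_add[OF this h] show "f \<in> tcoset N (push ?\<phi> g)"
    by (simp add: f tcoset_eq algebra_simps)
next
  fix f assume "f \<in> tcoset N (push ?\<phi> g)"
  then have "(\<lambda>x. f x - push ?\<phi> g x) \<in> N" by (simp add: tcoset_eq)
  with tcoset_self[OF trel_int_subgroup, of g] show "f \<in> induced ?\<phi> (tcoset N g)"
    unfolding induced_def by (intro CollectI exI[of _ g] exI[of _ "\<lambda>x. f x - push ?\<phi> g x"]) auto
qed

lemma TM_simps:
  "mcar TM = {tcoset N g | g. g \<in> TF}"
  "madd TM X Y = {(\<lambda>x. g x + h x) | g h. g \<in> X \<and> h \<in> Y}"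
  "mzero TM = N"
  "msmul TM s = induced (map_prod (\<lambda>u. s \<otimes>\<^bsub>S\<^esub> u) id)"
  unfolding tensor_mod_def Let_def induced_def tact_S_push by simp_all

lemma TM_cases: "X \<in> mcar TM \<Longrightarrow> (\<And>g. g \<in> TF \<Longrightarrow> X = tcoset N g \<Longrightarrow> P) \<Longrightarrow> P"
  unfolding TM_simps by blast

lemma TM_coset [simp, intro]: "g \<in> TF \<Longrightarrow> tcoset N g \<in> mcar TM"
  unfolding TM_simps by blast

lemma TM_add: "madd TM (tcoset N g) (tcoset N h) = tcoset N (\<lambda>x. g x + h x)"
  unfolding TM_simps by (rule tcoset_add[OF trel_int_subgroup])

lemma TM_zero: "mzero TM = tcoset N (\<lambda>x. 0)"
  unfolding TM_simps by (simp add: tcoset_zero)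

lemma TM_comm_group: "comm_group (add_grp TM)"
proof (rule comm_groupI, simp_all)
  show "\<And>x y. x \<in> mcar TM \<Longrightarrow> y \<in> mcar TM \<Longrightarrow> madd TM x y \<in> mcar TM"
    by (elim TM_cases) (auto simp: TM_add)
  show "mzero TM \<in> mcar TM" by (simp add: TM_zero)
  show "\<And>x y z. x \<in> mcar TM \<Longrightarrow> y \<in> mcar TM \<Longrightarrow> z \<in> mcar TM \<Longrightarrow>
      madd TM (madd TM x y) z = madd TM x (madd TM y z)"
    by (elim TM_cases) (simp add: TM_add add.assoc)
  show "\<And>x y. x \<in> mcar TM \<Longrightarrow> y \<in> mcar TM \<Longrightarrow> madd TM x y = madd TM y x"
    by (elim TM_cases) (simp add: TM_add add.commute)
  show "\<And>x. x \<in> mcar TM \<Longrightarrow> madd TM (mzero TM) x = x"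
    by (elim TM_cases) (simp add: TM_add TM_zero)
  show "\<And>x. x \<in> mcar TM \<Longrightarrow> \<exists>y\<in>mcar TM. madd TM y x = mzero TM"
  proof (elim TM_cases)
    fix x g assume g: "g \<in> TF" and x: "x = tcoset N g"
    have "madd TM (tcoset N (\<lambda>x. - g x)) x = mzero TM" by (simp add: x TM_add TM_zero)
    then show "\<exists>y\<in>mcar TM. madd TM y x = mzero TM" using g by blast
  qed
qed

sublocale TG: comm_group "add_grp TM" by (rule TM_comm_group)

lemma induced_hom:
  assumes ab: "tensor_compatible a b"
  shows "induced (map_prod a b) \<in> hom (add_grp TM) (add_grp TM)"
proof (rule homI)
  fix X assume "X \<in> carrier (add_grp TM)"
  then obtain g where "g \<in> TF" "X = tcoset N g" by (auto elim: TM_cases)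
  then show "induced (map_prod a b) X \<in> carrier (add_grp TM)"
    by (simp add: induced_coset[OF ab] push_map_prod_tfree[OF ab])
next
  fix X Y assume "X \<in> carrier (add_grp TM)" "Y \<in> carrier (add_grp TM)"
  then obtain g h where g: "g \<in> TF" "X = tcoset N g" and h: "h \<in> TF" "Y = tcoset N h"
    by (auto elim!: TM_cases)
  have "push (map_prod a b) (\<lambda>x. g x + h x) = (\<lambda>y. push (map_prod a b) g y + push (map_prod a b) h y)"
    using g h by (intro push_add) (auto simp: tfree_iff)
  then show "induced (map_prod a b) (X \<otimes>\<^bsub>add_grp TM\<^esub> Y) =
      induced (map_prod a b) X \<otimes>\<^bsub>add_grp TM\<^esub> induced (map_prod a b) Y"
    using g h by (simp add: TM_add induced_coset[OF ab] tfree_add)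
qed

lemma induced_tensor:
  "tensor_compatible a b \<Longrightarrow> s \<in> carrier S \<Longrightarrow> w \<in> mcar W \<Longrightarrow>
    induced (map_prod a b) (tensor s w) = tensor (a s) (b w)"
  by (simp add: induced_coset tfree_delta push_delta)

lemma TM_smul_tensor: "s \<in> carrier S \<Longrightarrow> u \<in> carrier S \<Longrightarrow> w \<in> mcar W \<Longrightarrow>
    msmul TM s (tensor u w) = tensor (s \<otimes>\<^bsub>S\<^esub> u) w"
  by (simp add: TM_simps induced_tensor tensor_compatible_smul)

lemma TM_smul_hom: "s \<in> carrier S \<Longrightarrow> msmul TM s \<in> hom (add_grp TM) (add_grp TM)"
  unfolding TM_simps by (rule induced_hom[OF tensor_compatible_smul])

lemma tensor_add_left: "s \<in> carrier S \<Longrightarrow> s' \<in> carrier S \<Longrightarrow> w \<in> mcar W \<Longrightarrow>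
    tensor (s \<oplus>\<^bsub>S\<^esub> s') w = madd TM (tensor s w) (tensor s' w)"
  using rel_add_left[of s s' w] by (simp add: TM_add tcoset_eq_iff[OF trel_int_subgroup] diff_diff_eq)

lemma tensor_add_right: "s \<in> carrier S \<Longrightarrow> w \<in> mcar W \<Longrightarrow> w' \<in> mcar W \<Longrightarrow>
    tensor s (madd W w w') = madd TM (tensor s w) (tensor s w')"
  using rel_add_right[of s w w'] by (simp add: TM_add tcoset_eq_iff[OF trel_int_subgroup] diff_diff_eq)

lemma tensor_balanced: "s \<in> carrier S \<Longrightarrow> r \<in> carrier R \<Longrightarrow> w \<in> mcar W \<Longrightarrow>
    tensor (s \<otimes>\<^bsub>S\<^esub> l r) w = tensor s (msmul W r w)"
  by (simp add: tcoset_eq_iff[OF trel_int_subgroup] rel_balanced)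

lemma tensor_closed [simp, intro]: "s \<in> carrier S \<Longrightarrow> w \<in> mcar W \<Longrightarrow> tensor s w \<in> mcar TM"
  by (auto intro: tfree_delta)

lemma delta_pow_closed:
  "a \<in> carrier S \<times> mcar W \<Longrightarrow> tcoset N (delta a) [^]\<^bsub>add_grp TM\<^esub> (n::int) \<in> mcar TM"
  using TG.int_pow_closed[of "tcoset N (delta a)"] by (auto intro: tfree_delta)

lemma TM_inv: "g \<in> TF \<Longrightarrow> inv\<^bsub>add_grp TM\<^esub> (tcoset N g) = tcoset N (\<lambda>x. - g x)"
  by (rule TG.inv_equality) (auto simp: TM_add TM_zero)

lemma TM_nat_pow: "(tcoset N g) [^]\<^bsub>add_grp TM\<^esub> (n::nat) = tcoset N (\<lambda>x. int n * g x)"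
proof (induct n)
  case (Suc n)
  have "(tcoset N g) [^]\<^bsub>add_grp TM\<^esub> (Suc n) = madd TM ((tcoset N g) [^]\<^bsub>add_grp TM\<^esub> n) (tcoset N g)"
    by (simp only: nat_pow_Suc add_grp_simps)
  also have "\<dots> = tcoset N (\<lambda>x. int n * g x + g x)" using Suc by (simp only: TM_add)
  also have "(\<lambda>x. int n * g x + g x) = (\<lambda>x. int (Suc n) * g x)" by (rule ext) (simp add: algebra_simps)
  finally show ?case .
qed (simp add: TM_zero)

lemma TM_int_pow:
  assumes g: "g \<in> TF"
  shows "(tcoset N g) [^]\<^bsub>add_grp TM\<^esub> (n::int) = tcoset N (\<lambda>x. n * g x)"
proof (cases "n < 0")
  case True
  have "(tcoset N g) [^]\<^bsub>add_grp TM\<^esub> n = inv\<^bsub>add_grp TM\<^esub> (tcoset N (\<lambda>x. int (nat (- n)) * g x))"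
    unfolding int_pow_def2 TM_nat_pow[symmetric] using True by (simp only: if_True)
  also have "\<dots> = tcoset N (\<lambda>x. - (int (nat (- n)) * g x))"
    by (rule TM_inv[OF tfree_smult[OF g]])
  also have "(\<lambda>x. - (int (nat (- n)) * g x)) = (\<lambda>x. n * g x)" using True by (intro ext) simp
  finally show ?thesis .
next
  case False
  have "(tcoset N g) [^]\<^bsub>add_grp TM\<^esub> n = tcoset N (\<lambda>x. int (nat n) * g x)"
    unfolding int_pow_def2 TM_nat_pow[symmetric] using False by (simp only: if_False)
  also have "(\<lambda>x. int (nat n) * g x) = (\<lambda>x. n * g x)" using False by (intro ext) simp
  finally show ?thesis .
qed

lemma tensor_decomp_on:
  assumes "finite D" "D \<subseteq> carrier S \<times> mcar W"
  shows "g \<in> TF \<Longrightarrow> supp g \<subseteq> D \<Longrightarrow>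
    tcoset N g = finprod (add_grp TM) (\<lambda>a. tcoset N (delta a) [^]\<^bsub>add_grp TM\<^esub> g a) D"
  using assms
proof (induct D arbitrary: g rule: finite_induct)
  case empty
  then have "g = (\<lambda>x. 0)" by (auto simp: supp_def)
  then show ?case by (simp add: TM_zero[symmetric])
next
  case (insert a D)
  define g' where "g' = (\<lambda>x. if x = a then 0 else g x)"
  have sg': "supp g' \<subseteq> supp g" by (auto simp: supp_def g'_def)
  have g'F: "g' \<in> TF" using insert(4) sg' unfolding tfree_iff by (meson rev_finite_subset subset_trans)
  have sg'D: "supp g' \<subseteq> D" using insert(5) by (auto simp: supp_def g'_def)
  have IH: "tcoset N g' = finprod (add_grp TM) (\<lambda>a. tcoset N (delta a) [^]\<^bsub>add_grp TM\<^esub> g' a) D"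
    using insert g'F sg'D by auto
  have aC: "a \<in> carrier S \<times> mcar W" using insert by auto
  have "finprod (add_grp TM) (\<lambda>a. tcoset N (delta a) [^]\<^bsub>add_grp TM\<^esub> g a) (insert a D) =
        madd TM (tcoset N (delta a) [^]\<^bsub>add_grp TM\<^esub> g a) (finprod (add_grp TM) (\<lambda>a. tcoset N (delta a) [^]\<^bsub>add_grp TM\<^esub> g a) D)"
    using insert aC delta_pow_closed by (subst TG.finprod_insert) (auto simp: Pi_iff subset_iff)
  also have "finprod (add_grp TM) (\<lambda>a. tcoset N (delta a) [^]\<^bsub>add_grp TM\<^esub> g a) D =
      finprod (add_grp TM) (\<lambda>a. tcoset N (delta a) [^]\<^bsub>add_grp TM\<^esub> g' a) D"
    using insert delta_pow_closed by (intro TG.finprod_cong') (auto simp: g'_def Pi_iff subset_iff)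
  also have "\<dots> = tcoset N g'" by (rule IH[symmetric])
  also have "tcoset N (delta a) [^]\<^bsub>add_grp TM\<^esub> g a = tcoset N (\<lambda>x. g a * delta a x)"
    using aC by (simp add: TM_int_pow tfree_delta)
  also have "madd TM (tcoset N (\<lambda>x. g a * delta a x)) (tcoset N g') = tcoset N g"
    by (simp add: TM_add) (rule arg_cong[where f="tcoset N"], auto simp: g'_def delta_def)
  finally show ?case by simp
qed

lemma tensor_decomp:
  "g \<in> TF \<Longrightarrow> tcoset N g = finprod (add_grp TM) (\<lambda>a. tcoset N (delta a) [^]\<^bsub>add_grp TM\<^esub> g a) (supp g)"
  by (rule tensor_decomp_on) (auto simp: tfree_iff)

lemma tensor_hom_eqI:
  assumes H: "comm_group H" and h1: "h1 \<in> hom (add_grp TM) H" and h2: "h2 \<in> hom (add_grp TM) H"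
    and eq: "\<And>s w. s \<in> carrier S \<Longrightarrow> w \<in> mcar W \<Longrightarrow> h1 (tensor s w) = h2 (tensor s w)"
    and X: "X \<in> mcar TM"
  shows "h1 X = h2 X"
proof -
  interpret H: comm_group H by (rule H)
  obtain g where g: "g \<in> TF" and Xg: "X = tcoset N g" using X by (rule TM_cases)
  have sub: "supp g \<subseteq> carrier S \<times> mcar W" using g tfree_iff by blast
  have expand: "h X = finprod H (\<lambda>a. h (tcoset N (delta a)) [^]\<^bsub>H\<^esub> g a) (supp g)"
    if h: "h \<in> hom (add_grp TM) H" for h
  proof -
    have "h X = finprod H (\<lambda>a. h (tcoset N (delta a) [^]\<^bsub>add_grp TM\<^esub> g a)) (supp g)"
      unfolding Xg tensor_decomp[OF g] using sub
      by (intro hom_finprod[OF TM_comm_group H h]) (auto intro!: delta_pow_closed)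
    also have "\<dots> = finprod H (\<lambda>a. h (tcoset N (delta a)) [^]\<^bsub>H\<^esub> g a) (supp g)"
      using sub h by (intro H.finprod_cong' hom_int_pow[OF h _ TG.is_group H.is_group] H.int_pow_closed)
        (auto simp: hom_def Pi_iff)
    finally show ?thesis .
  qed
  show ?thesis
    unfolding expand[OF h1] expand[OF h2] using sub eq h2
    by (intro H.finprod_cong' H.int_pow_closed) (auto simp: hom_def Pi_iff)
qed

end

definition free_ext :: "'h monoid \<Rightarrow> ('x \<Rightarrow> 'h) \<Rightarrow> ('x \<Rightarrow> int) \<Rightarrow> 'h" where
  "free_ext H F g = finprod H (\<lambda>x. F x [^]\<^bsub>H\<^esub> g x) (supp g)"

definition tensor_lift :: "'h monoid \<Rightarrow> ('x \<Rightarrow> 'h) \<Rightarrow> ('x \<Rightarrow> int) set \<Rightarrow> 'h" where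
  "tensor_lift H F X = free_ext H F (SOME g. g \<in> X)"

locale balanced_map = tensor_setting R S l W for R :: "'r ring" and S :: "'s ring" and l and W :: "('r, 'w) lmod" +
  fixes H :: "'h monoid" and F :: "'s \<times> 'w \<Rightarrow> 'h"
  assumes H: "comm_group H"
    and F_closed: "\<And>a. a \<in> carrier S \<times> mcar W \<Longrightarrow> F a \<in> carrier H"
    and F_add_left: "\<And>s s' w. s \<in> carrier S \<Longrightarrow> s' \<in> carrier S \<Longrightarrow> w \<in> mcar W \<Longrightarrow>
        F (s \<oplus>\<^bsub>S\<^esub> s', w) = F (s, w) \<otimes>\<^bsub>H\<^esub> F (s', w)"
    and F_add_right: "\<And>s w w'. s \<in> carrier S \<Longrightarrow> w \<in> mcar W \<Longrightarrow> w' \<in> mcar W \<Longrightarrow>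
        F (s, madd W w w') = F (s, w) \<otimes>\<^bsub>H\<^esub> F (s, w')"
    and F_balanced: "\<And>s r w. s \<in> carrier S \<Longrightarrow> r \<in> carrier R \<Longrightarrow> w \<in> mcar W \<Longrightarrow>
        F (s \<otimes>\<^bsub>S\<^esub> l r, w) = F (s, msmul W r w)"
begin

sublocale HG: comm_group H by (rule H)

lemma free_ext_superset:
  assumes "finite D" "supp g \<subseteq> D" "D \<subseteq> carrier S \<times> mcar W"
  shows "free_ext H F g = finprod H (\<lambda>x. F x [^]\<^bsub>H\<^esub> g x) D"
  unfolding free_ext_def
  by (rule HG.finprod_mono_neutral_cong_left) (use assms in \<open>auto simp: supp_def F_closed\<close>)

lemma free_ext_closed [simp, intro]: "g \<in> TF \<Longrightarrow> free_ext H F g \<in> carrier H"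
  unfolding free_ext_def by (rule HG.finprod_closed) (auto simp: tfree_iff F_closed)

lemma free_ext_add:
  assumes g: "g \<in> TF" and h: "h \<in> TF"
  shows "free_ext H F (\<lambda>x. g x + h x) = free_ext H F g \<otimes>\<^bsub>H\<^esub> free_ext H F h"
proof -
  let ?D = "supp g \<union> supp h"
  have D: "finite ?D" "?D \<subseteq> carrier S \<times> mcar W" using g h tfree_iff by auto
  have "free_ext H F (\<lambda>x. g x + h x) = finprod H (\<lambda>x. F x [^]\<^bsub>H\<^esub> (g x + h x)) ?D"
    by (rule free_ext_superset[OF D(1) _ D(2)]) (auto simp: supp_def)
  also have "\<dots> = finprod H (\<lambda>x. F x [^]\<^bsub>H\<^esub> g x \<otimes>\<^bsub>H\<^esub> F x [^]\<^bsub>H\<^esub> h x) ?D"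
    using D(2) by (intro HG.finprod_cong') (auto simp: HG.int_pow_mult F_closed Pi_iff subset_iff)
  also have "\<dots> = finprod H (\<lambda>x. F x [^]\<^bsub>H\<^esub> g x) ?D \<otimes>\<^bsub>H\<^esub> finprod H (\<lambda>x. F x [^]\<^bsub>H\<^esub> h x) ?D"
    using D(2) by (intro HG.finprod_multf) (auto simp: Pi_iff subset_iff F_closed)
  also have "finprod H (\<lambda>x. F x [^]\<^bsub>H\<^esub> g x) ?D = free_ext H F g"
    by (rule free_ext_superset[symmetric]) (use D in auto)
  also have "finprod H (\<lambda>x. F x [^]\<^bsub>H\<^esub> h x) ?D = free_ext H F h"
    by (rule free_ext_superset[symmetric]) (use D in auto)
  finally show ?thesis .
qed

lemma free_ext_zero: "free_ext H F (\<lambda>x. 0) = \<one>\<^bsub>H\<^esub>"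
  unfolding free_ext_def supp_def by simp

lemma free_ext_diff:
  assumes g: "g \<in> TF" and h: "h \<in> TF"
  shows "free_ext H F (\<lambda>x. g x - h x) = free_ext H F g \<otimes>\<^bsub>H\<^esub> inv\<^bsub>H\<^esub> (free_ext H F h)"
proof -
  have "free_ext H F (\<lambda>x. - h x) \<otimes>\<^bsub>H\<^esub> free_ext H F h = \<one>\<^bsub>H\<^esub>"
    using free_ext_add[OF tfree_neg[OF h] h] by (simp add: free_ext_zero)
  then have neg: "free_ext H F (\<lambda>x. - h x) = inv\<^bsub>H\<^esub> (free_ext H F h)"
    using HG.inv_equality free_ext_closed[OF h] free_ext_closed[OF tfree_neg[OF h]] by metis
  show ?thesis using free_ext_add[OF g tfree_neg[OF h]] by (simp add: neg)
qed

lemma free_ext_delta: "a \<in> carrier S \<times> mcar W \<Longrightarrow> free_ext H F (delta a) = F a"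
  unfolding free_ext_def by (simp add: F_closed)

lemma free_ext_delta_diff2:
  assumes "a \<in> carrier S \<times> mcar W" "b \<in> carrier S \<times> mcar W"
  shows "free_ext H F (\<lambda>x. delta a x - delta b x) = F a \<otimes>\<^bsub>H\<^esub> inv\<^bsub>H\<^esub> (F b)"
  using assms by (simp add: free_ext_diff tfree_delta free_ext_delta)

lemma free_ext_delta_diff3:
  assumes "a \<in> carrier S \<times> mcar W" "b \<in> carrier S \<times> mcar W" "c \<in> carrier S \<times> mcar W"
  shows "free_ext H F (\<lambda>x. delta a x - delta b x - delta c x) = F a \<otimes>\<^bsub>H\<^esub> inv\<^bsub>H\<^esub> (F b) \<otimes>\<^bsub>H\<^esub> inv\<^bsub>H\<^esub> (F c)"
  using assms by (simp add: free_ext_diff tfree_diff tfree_delta free_ext_delta_diff2 free_ext_delta)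

lemma mult_inv_inv_one:
  assumes "x \<in> carrier H" "y \<in> carrier H" "z \<in> carrier H" and "x = y \<otimes>\<^bsub>H\<^esub> z"
  shows "x \<otimes>\<^bsub>H\<^esub> inv\<^bsub>H\<^esub> y \<otimes>\<^bsub>H\<^esub> inv\<^bsub>H\<^esub> z = \<one>\<^bsub>H\<^esub>"
proof -
  have "x \<otimes>\<^bsub>H\<^esub> inv\<^bsub>H\<^esub> y \<otimes>\<^bsub>H\<^esub> inv\<^bsub>H\<^esub> z = x \<otimes>\<^bsub>H\<^esub> (inv\<^bsub>H\<^esub> y \<otimes>\<^bsub>H\<^esub> inv\<^bsub>H\<^esub> z)"
    using assms by (simp add: HG.m_assoc)
  also have "inv\<^bsub>H\<^esub> y \<otimes>\<^bsub>H\<^esub> inv\<^bsub>H\<^esub> z = inv\<^bsub>H\<^esub> x"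
    using assms by (simp add: HG.inv_mult)
  finally show ?thesis using assms by simp
qed

lemma free_ext_trel: "g \<in> N \<Longrightarrow> free_ext H F g = \<one>\<^bsub>H\<^esub>"
proof (induct rule: trel.induct)
  case (trel_gen g)
  then show ?case
  proof (cases rule: tgens_cases)
    case (add_left s s' w)
    then show ?thesis using F_closed[of "(s, w)"] F_closed[of "(s', w)"] F_closed[of "(s \<oplus>\<^bsub>S\<^esub> s', w)"]
      by (simp add: free_ext_delta_diff3 mult_inv_inv_one F_add_left)
  next
    case (add_right s w w')
    then show ?thesis using F_closed[of "(s, w)"] F_closed[of "(s, w')"] F_closed[of "(s, madd W w w')"]
      by (simp add: free_ext_delta_diff3 mult_inv_inv_one F_add_right)
  next
    case (balanced s r w)
    then show ?thesis using F_closed[of "(s, msmul W r w)"]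
      by (simp add: free_ext_delta_diff2 F_balanced HG.r_inv)
  qed
qed (simp_all add: free_ext_zero free_ext_diff trel_tfree)

lemma tensor_lift_coset:
  assumes g: "g \<in> TF"
  shows "tensor_lift H F (tcoset N g) = free_ext H F g"
proof -
  define g' where "g' = (SOME g'. g' \<in> tcoset N g)"
  have "\<exists>g'. g' \<in> tcoset N g" using tcoset_self[OF trel_int_subgroup] by blast
  then have "g' \<in> tcoset N g" unfolding g'_def by (rule someI_ex)
  then have d: "(\<lambda>x. g' x - g x) \<in> N" by (simp add: tcoset_eq)
  have "free_ext H F g' = free_ext H F g \<otimes>\<^bsub>H\<^esub> free_ext H F (\<lambda>x. g' x - g x)"
    using free_ext_add[OF g trel_tfree[OF d]] by simp
  also have "\<dots> = free_ext H F g" using free_ext_trel[OF d] free_ext_closed[OF g] by simp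
  finally show ?thesis unfolding tensor_lift_def g'_def .
qed

lemma tensor_lift_hom: "tensor_lift H F \<in> hom (add_grp TM) H"
proof (rule homI)
  fix X assume "X \<in> carrier (add_grp TM)"
  then obtain g where "g \<in> TF" "X = tcoset N g" by (auto elim: TM_cases)
  then show "tensor_lift H F X \<in> carrier H" by (simp add: tensor_lift_coset)
next
  fix X Y assume "X \<in> carrier (add_grp TM)" "Y \<in> carrier (add_grp TM)"
  then obtain g h where "g \<in> TF" "X = tcoset N g" "h \<in> TF" "Y = tcoset N h" by (auto elim!: TM_cases)
  then show "tensor_lift H F (X \<otimes>\<^bsub>add_grp TM\<^esub> Y) = tensor_lift H F X \<otimes>\<^bsub>H\<^esub> tensor_lift H F Y"
    by (simp add: tensor_lift_coset TM_add free_ext_add tfree_add)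
qed

lemma tensor_lift_tensor: "s \<in> carrier S \<Longrightarrow> w \<in> mcar W \<Longrightarrow> tensor_lift H F (tensor s w) = F (s, w)"
  by (simp add: tensor_lift_coset tfree_delta free_ext_delta)

end

context tensor_setting
begin

lemma balanced_mapI:
  assumes "comm_group H"
    and "\<And>a. a \<in> carrier S \<times> mcar W \<Longrightarrow> F a \<in> carrier H"
    and "\<And>s s' w. s \<in> carrier S \<Longrightarrow> s' \<in> carrier S \<Longrightarrow> w \<in> mcar W \<Longrightarrow>
        F (s \<oplus>\<^bsub>S\<^esub> s', w) = F (s, w) \<otimes>\<^bsub>H\<^esub> F (s', w)"
    and "\<And>s w w'. s \<in> carrier S \<Longrightarrow> w \<in> mcar W \<Longrightarrow> w' \<in> mcar W \<Longrightarrow>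
        F (s, madd W w w') = F (s, w) \<otimes>\<^bsub>H\<^esub> F (s, w')"
    and "\<And>s r w. s \<in> carrier S \<Longrightarrow> r \<in> carrier R \<Longrightarrow> w \<in> mcar W \<Longrightarrow>
        F (s \<otimes>\<^bsub>S\<^esub> l r, w) = F (s, msmul W r w)"
  shows "balanced_map R S l W H F"
  by (intro balanced_map.intro tensor_setting_axioms balanced_map_axioms.intro assms)

lemma tensor_setting_lmod: "is_lmod S TM"
proof -
  have hom_eq: "h1 X = h2 X" if "h1 \<in> hom (add_grp TM) (add_grp TM)" "h2 \<in> hom (add_grp TM) (add_grp TM)"
      "\<And>s w. s \<in> carrier S \<Longrightarrow> w \<in> mcar W \<Longrightarrow> h1 (tensor s w) = h2 (tensor s w)" "X \<in> mcar TM" for h1 h2 X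
    by (rule tensor_hom_eqI[OF TM_comm_group that])
  show ?thesis unfolding is_lmod_def
  proof (intro conjI ballI)
    show "\<And>x y. x \<in> mcar TM \<Longrightarrow> y \<in> mcar TM \<Longrightarrow> madd TM x y \<in> mcar TM" using TG.m_closed by simp
    show "\<And>x y z. x \<in> mcar TM \<Longrightarrow> y \<in> mcar TM \<Longrightarrow> z \<in> mcar TM \<Longrightarrow> madd TM (madd TM x y) z = madd TM x (madd TM y z)"
      using TG.m_assoc by simp
    show "\<And>x y. x \<in> mcar TM \<Longrightarrow> y \<in> mcar TM \<Longrightarrow> madd TM x y = madd TM y x" using TG.m_comm by simp
    show "mzero TM \<in> mcar TM" using TG.one_closed by simp
    show "\<And>x. x \<in> mcar TM \<Longrightarrow> madd TM (mzero TM) x = x" using TG.l_one by simp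
    show "\<And>x. x \<in> mcar TM \<Longrightarrow> \<exists>y\<in>mcar TM. madd TM x y = mzero TM"
      using TG.r_inv TG.inv_closed by (metis add_grp_simps)
    show "\<And>a x. a \<in> carrier S \<Longrightarrow> x \<in> mcar TM \<Longrightarrow> msmul TM a x \<in> mcar TM"
      using TM_smul_hom unfolding hom_def by auto
    show "\<And>a x y. a \<in> carrier S \<Longrightarrow> x \<in> mcar TM \<Longrightarrow> y \<in> mcar TM \<Longrightarrow>
        msmul TM a (madd TM x y) = madd TM (msmul TM a x) (msmul TM a y)"
      using TM_smul_hom unfolding hom_def by auto
    fix a b X assume a: "a \<in> carrier S" and b: "b \<in> carrier S" and X: "X \<in> mcar TM"
    show "msmul TM (a \<oplus>\<^bsub>S\<^esub> b) X = madd TM (msmul TM a X) (msmul TM b X)"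
      using hom_mult_pointwise[OF TM_comm_group TM_smul_hom[OF a] TM_smul_hom[OF b]] a b
      by (intro hom_eq[OF TM_smul_hom _ _ X]) (auto simp: TM_smul_tensor S.l_distr tensor_add_left)
    show "msmul TM (a \<otimes>\<^bsub>S\<^esub> b) X = msmul TM a (msmul TM b X)"
      using a b by (intro hom_eq[OF TM_smul_hom hom_comp[OF TM_smul_hom[OF b] TM_smul_hom[OF a]] _ X])
        (auto simp: TM_smul_tensor S.m_assoc)
  next
    fix X assume X: "X \<in> mcar TM"
    have "(\<lambda>X. X) \<in> hom (add_grp TM) (add_grp TM)" by (rule homI) auto
    then show "msmul TM \<one>\<^bsub>S\<^esub> X = X"
      by (intro hom_eq[OF TM_smul_hom _ _ X]) (auto simp: TM_smul_tensor)
  qed (rule ringS)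
qed

sublocale TMmod: lmodule S TM by (rule lmodule.intro[OF tensor_setting_lmod])

definition tensor_map :: "('s \<Rightarrow> 's) \<Rightarrow> ('w \<Rightarrow> 'w) \<Rightarrow> ('s \<times> 'w \<Rightarrow> int) set \<Rightarrow> ('s \<times> 'w \<Rightarrow> int) set" where
  "tensor_map a b = (\<lambda>X\<in>mcar TM. induced (map_prod a b) X)"

lemma tensor_rho_eq_tensor_map: "tensor_rho R S l W f = tensor_map id f"
  unfolding tensor_rho_def tensor_map_def induced_def tact_W_push ..

lemma tensor_map_hom: "tensor_compatible a b \<Longrightarrow> tensor_map a b \<in> hom (add_grp TM) (add_grp TM)"
  unfolding tensor_map_def by (rule TG.hom_restrict[OF induced_hom]) simp_all

lemma tensor_map_tensor:
  "tensor_compatible a b \<Longrightarrow> s \<in> carrier S \<Longrightarrow> w \<in> mcar W \<Longrightarrow> tensor_map a b (tensor s w) = tensor (a s) (b w)"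
  by (simp add: tensor_map_def induced_tensor)

lemma tensor_map_closed: "tensor_compatible a b \<Longrightarrow> X \<in> mcar TM \<Longrightarrow> tensor_map a b X \<in> mcar TM"
  using tensor_map_hom unfolding hom_def by auto

lemma tensor_map_lin:
  assumes ab: "tensor_compatible a b"
    and a_lmult: "\<And>s u. s \<in> carrier S \<Longrightarrow> u \<in> carrier S \<Longrightarrow> a (s \<otimes>\<^bsub>S\<^esub> u) = s \<otimes>\<^bsub>S\<^esub> a u"
  shows "lin S TM TM (tensor_map a b)"
proof (rule linI)
  show "\<And>X Y. X \<in> mcar TM \<Longrightarrow> Y \<in> mcar TM \<Longrightarrow> tensor_map a b (madd TM X Y) = madd TM (tensor_map a b X) (tensor_map a b Y)"
    using tensor_map_hom[OF ab] unfolding hom_def by simp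
  fix s X assume s: "s \<in> carrier S" and X: "X \<in> mcar TM"
  show "tensor_map a b (msmul TM s X) = msmul TM s (tensor_map a b X)"
    using s ab
    by (intro tensor_hom_eqI[OF TM_comm_group hom_comp[OF TMmod.smul_hom[OF s] tensor_map_hom[OF ab]]
          hom_comp[OF tensor_map_hom[OF ab] TMmod.smul_hom[OF s]] _ X])
       (auto simp: TM_smul_tensor tensor_map_tensor a_lmult tensor_compatible_def)
qed (use tensor_map_closed[OF ab] in \<open>auto simp: tensor_map_def\<close>)

lemma endo_eqI:
  assumes g: "lin S TM TM g" and g': "lin S TM TM g'"
    and e: "\<And>w. w \<in> mcar W \<Longrightarrow> g (tensor \<one>\<^bsub>S\<^esub> w) = g' (tensor \<one>\<^bsub>S\<^esub> w)"
  shows "g = g'"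
proof (rule lin_ext[OF g g'])
  fix X assume X: "X \<in> mcar TM"
  show "g X = g' X"
  proof (rule tensor_hom_eqI[OF TM_comm_group lin_hom[OF g] lin_hom[OF g'] _ X])
    fix s w assume s: "s \<in> carrier S" and w: "w \<in> mcar W"
    have "tensor s w = msmul TM s (tensor \<one>\<^bsub>S\<^esub> w)" using s w by (simp add: TM_smul_tensor)
    then show "g (tensor s w) = g' (tensor s w)" using s w e by (simp add: lin_smul[OF g] lin_smul[OF g'])
  qed
qed

lemma tensor_zero_left: "w \<in> mcar W \<Longrightarrow> tensor \<zero>\<^bsub>S\<^esub> w = mzero TM"
  using tensor_add_left[of "\<zero>\<^bsub>S\<^esub>" "\<zero>\<^bsub>S\<^esub>" w] TG.l_cancel_one'[of "tensor \<zero>\<^bsub>S\<^esub> w" "tensor \<zero>\<^bsub>S\<^esub> w"]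
  by simp

lemma tensor_finsum_left:
  assumes f: "f \<in> A \<rightarrow> carrier S" and fin: "finite A" and w: "w \<in> mcar W"
  shows "tensor (finsum S f A) w = finprod (add_grp TM) (\<lambda>a. tensor (f a) w) A"
  using fin f
proof (induct A rule: finite_induct)
  case (insert a A)
  then show ?case
    using w by (simp add: S.finsum_insert TG.finprod_insert tensor_add_left S.finsum_closed Pi_iff)
qed (use w in \<open>simp add: tensor_zero_left\<close>)

lemma tensor_right_hom: "c \<in> carrier S \<Longrightarrow> (\<lambda>w. tensor c w) \<in> hom (add_grp W) (add_grp TM)"
  by (rule homI) (auto simp: tensor_add_right)

end

section \<open>Dual bases of a centrally projective Frobenius extension\<close>

locale frobenius_setting = tensor_setting R S l W for R :: "'r ring" and S :: "'s ring" and l and W :: "('r, 'w) lmod" +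
  fixes \<psi> :: "'s \<Rightarrow> 's \<Rightarrow> 'r" and m :: nat and p :: "(nat \<Rightarrow> 'r) \<Rightarrow> 's" and i :: "'s \<Rightarrow> nat \<Rightarrow> 'r"
  assumes psi_bij: "bij_betw \<psi> (carrier S) {\<phi>. lin R (restr_mod R S l) (regmod R) \<phi>}"
    and psi_bimod: "\<And>s x r. s \<in> carrier S \<Longrightarrow> x \<in> carrier S \<Longrightarrow> r \<in> carrier R \<Longrightarrow>
        \<psi> (s \<otimes>\<^bsub>S\<^esub> x \<otimes>\<^bsub>S\<^esub> l r) = (\<lambda>y\<in>carrier S. \<psi> x (y \<otimes>\<^bsub>S\<^esub> s) \<otimes>\<^bsub>R\<^esub> r)"
    and cp_p: "lin R (freemod R m) (restr_mod R S l) p"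
    and cp_i: "lin R (restr_mod R S l) (freemod R m) i"
    and cp_p_rmult: "\<And>v r. v \<in> mcar (freemod R m) \<Longrightarrow> r \<in> carrier R \<Longrightarrow> p (freemod_rsmul R m v r) = p v \<otimes>\<^bsub>S\<^esub> l r"
    and cp_i_rmult: "\<And>x r. x \<in> carrier S \<Longrightarrow> r \<in> carrier R \<Longrightarrow> i (x \<otimes>\<^bsub>S\<^esub> l r) = freemod_rsmul R m (i x) r"
    and cp_p_i: "\<And>x. x \<in> carrier S \<Longrightarrow> p (i x) = x"
begin

definition frob_form :: "'s \<Rightarrow> 'r" where "frob_form = \<psi> \<one>\<^bsub>S\<^esub>"
definition cbasis :: "nat \<Rightarrow> 's" where "cbasis j = p (unit_vec R m j)"
definition coord :: "nat \<Rightarrow> 's \<Rightarrow> 'r" where "coord j s = i s j"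
definition dbasis :: "nat \<Rightarrow> 's" where "dbasis j = inv_into (carrier S) \<psi> (\<lambda>y\<in>carrier S. coord j y)"

definition centralizes :: "'s \<Rightarrow> bool" where
  "centralizes c \<longleftrightarrow> c \<in> carrier S \<and> (\<forall>r\<in>carrier R. c \<otimes>\<^bsub>S\<^esub> l r = l r \<otimes>\<^bsub>S\<^esub> c)"

lemma restr_mod_S_lmod: "is_lmod R (restr_mod R S l)"
  by (rule restr_lmod[OF W.R.ring_axioms ringS lhom])

lemma coord_closed [simp, intro]: "j < m \<Longrightarrow> s \<in> carrier S \<Longrightarrow> coord j s \<in> carrier R"
  using lin_closed[OF cp_i, of s] by (simp add: coord_def freemod_def)

lemma coord_add: "j < m \<Longrightarrow> s \<in> carrier S \<Longrightarrow> s' \<in> carrier S \<Longrightarrow> coord j (s \<oplus>\<^bsub>S\<^esub> s') = coord j s \<oplus>\<^bsub>R\<^esub> coord j s'"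
  using lin_add[OF cp_i, of s s'] by (simp add: coord_def freemod_def)

lemma coord_lmult: "j < m \<Longrightarrow> r \<in> carrier R \<Longrightarrow> s \<in> carrier S \<Longrightarrow> coord j (l r \<otimes>\<^bsub>S\<^esub> s) = r \<otimes>\<^bsub>R\<^esub> coord j s"
  using lin_smul[OF cp_i, of r s] by (simp add: coord_def freemod_def)

lemma coord_rmult: "j < m \<Longrightarrow> r \<in> carrier R \<Longrightarrow> s \<in> carrier S \<Longrightarrow> coord j (s \<otimes>\<^bsub>S\<^esub> l r) = coord j s \<otimes>\<^bsub>R\<^esub> r"
  using cp_i_rmult[of s r] by (simp add: coord_def freemod_rsmul_def)

lemma coord_lin: "j < m \<Longrightarrow> lin R (restr_mod R S l) (regmod R) (\<lambda>y\<in>carrier S. coord j y)"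
  by (rule linI) (auto simp: coord_add coord_lmult)

lemma cbasis_closed [simp, intro]: "cbasis j \<in> carrier S"
  using lin_closed[OF cp_p unit_vec_mem[OF W.R.ring_axioms]] by (simp add: cbasis_def)

lemma centralizes_cbasis: "j < m \<Longrightarrow> centralizes (cbasis j)"
  unfolding centralizes_def
proof (intro conjI ballI cbasis_closed)
  fix r assume j: "j < m" and r: "r \<in> carrier R"
  have e: "unit_vec R m j \<in> mcar (freemod R m)" by (rule unit_vec_mem[OF W.R.ring_axioms])
  have "freemod_rsmul R m (unit_vec R m j) r = msmul (freemod R m) r (unit_vec R m j)"
    using r by (auto simp: freemod_rsmul_def freemod_def unit_vec_def)
  then show "cbasis j \<otimes>\<^bsub>S\<^esub> l r = l r \<otimes>\<^bsub>S\<^esub> cbasis j"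
    using lin_smul[OF cp_p r e] cp_p_rmult[OF e r] by (simp add: cbasis_def)
qed

lemma cbasis_expansion: "s \<in> carrier S \<Longrightarrow> s = finsum S (\<lambda>j. l (coord j s) \<otimes>\<^bsub>S\<^esub> cbasis j) {..<m}"
proof -
  assume s: "s \<in> carrier S"
  have "s = p (i s)" using cp_p_i[OF s] by simp
  also have "\<dots> = finprod (add_grp (restr_mod R S l)) (\<lambda>j. msmul (restr_mod R S l) (i s j) (p (unit_vec R m j))) {..<m}"
    by (rule lin_freemod_decomp[OF W.R.ring_axioms restr_mod_S_lmod cp_p lin_closed[OF cp_i]]) (simp add: s)
  also have "\<dots> = finsum S (\<lambda>j. l (coord j s) \<otimes>\<^bsub>S\<^esub> cbasis j) {..<m}"
    by (simp add: add_grp_restr_mod finsum_def coord_def cbasis_def)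
  finally show ?thesis .
qed

lemma frob_form_lin: "lin R (restr_mod R S l) (regmod R) frob_form"
  using bij_betwE[OF psi_bij] by (simp add: frob_form_def)

lemma frob_form_closed [simp, intro]: "y \<in> carrier S \<Longrightarrow> frob_form y \<in> carrier R"
  using lin_closed[OF frob_form_lin] by simp

lemma frob_form_add: "y \<in> carrier S \<Longrightarrow> y' \<in> carrier S \<Longrightarrow> frob_form (y \<oplus>\<^bsub>S\<^esub> y') = frob_form y \<oplus>\<^bsub>R\<^esub> frob_form y'"
  using lin_add[OF frob_form_lin] by simp

lemma frob_form_lmult: "r \<in> carrier R \<Longrightarrow> y \<in> carrier S \<Longrightarrow> frob_form (l r \<otimes>\<^bsub>S\<^esub> y) = r \<otimes>\<^bsub>R\<^esub> frob_form y"
  using lin_smul[OF frob_form_lin] by simp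

lemma psi_eq_frob_form: "x \<in> carrier S \<Longrightarrow> y \<in> carrier S \<Longrightarrow> \<psi> x y = frob_form (y \<otimes>\<^bsub>S\<^esub> x)"
  using psi_bimod[OF _ S.one_closed W.R.one_closed, of x] frob_form_closed[of "y \<otimes>\<^bsub>S\<^esub> x"]
  by (simp add: frob_form_def)

lemma frob_form_rmult: "r \<in> carrier R \<Longrightarrow> y \<in> carrier S \<Longrightarrow> frob_form (y \<otimes>\<^bsub>S\<^esub> l r) = frob_form y \<otimes>\<^bsub>R\<^esub> r"
  using psi_bimod[OF S.one_closed S.one_closed, of r] psi_eq_frob_form[of "l r" y]
  by (simp add: frob_form_def)

lemma frob_form_separates:
  assumes x: "x \<in> carrier S" and x': "x' \<in> carrier S"
    and e: "\<And>y. y \<in> carrier S \<Longrightarrow> frob_form (y \<otimes>\<^bsub>S\<^esub> x) = frob_form (y \<otimes>\<^bsub>S\<^esub> x')"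
  shows "x = x'"
proof -
  have "lin R (restr_mod R S l) (regmod R) (\<psi> x)" "lin R (restr_mod R S l) (regmod R) (\<psi> x')"
    using bij_betwE[OF psi_bij] x x' by auto
  then have "\<psi> x = \<psi> x'" by (rule lin_ext) (simp add: psi_eq_frob_form x x' e)
  then show ?thesis using bij_betw_imp_inj_on[OF psi_bij] x x' by (auto dest: inj_onD)
qed

lemma dbasis_closed [simp, intro]: "j < m \<Longrightarrow> dbasis j \<in> carrier S"
  unfolding dbasis_def using coord_lin bij_betw_imp_surj_on[OF psi_bij]
  by (metis (no_types, lifting) inv_into_into mem_Collect_eq)

lemma frob_form_dbasis: "j < m \<Longrightarrow> y \<in> carrier S \<Longrightarrow> frob_form (y \<otimes>\<^bsub>S\<^esub> dbasis j) = coord j y"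
proof -
  assume j: "j < m" and y: "y \<in> carrier S"
  have "\<psi> (dbasis j) = (\<lambda>y\<in>carrier S. coord j y)"
    unfolding dbasis_def using coord_lin[OF j] bij_betw_imp_surj_on[OF psi_bij]
    by (metis (no_types, lifting) f_inv_into_f mem_Collect_eq)
  then show ?thesis using psi_eq_frob_form[of "dbasis j" y] j y by simp
qed

lemma centralizes_dbasis: "j < m \<Longrightarrow> centralizes (dbasis j)"
  unfolding centralizes_def
proof (intro conjI ballI dbasis_closed)
  fix r assume j: "j < m" and r: "r \<in> carrier R"
  show "dbasis j \<otimes>\<^bsub>S\<^esub> l r = l r \<otimes>\<^bsub>S\<^esub> dbasis j"
  proof (rule frob_form_separates)
    fix y assume y: "y \<in> carrier S"
    have "frob_form (y \<otimes>\<^bsub>S\<^esub> (dbasis j \<otimes>\<^bsub>S\<^esub> l r)) = frob_form (y \<otimes>\<^bsub>S\<^esub> dbasis j) \<otimes>\<^bsub>R\<^esub> r"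
      using j r y by (simp add: S.m_assoc[symmetric] frob_form_rmult)
    also have "\<dots> = coord j (y \<otimes>\<^bsub>S\<^esub> l r)" using j r y by (simp add: frob_form_dbasis coord_rmult)
    also have "\<dots> = frob_form (y \<otimes>\<^bsub>S\<^esub> (l r \<otimes>\<^bsub>S\<^esub> dbasis j))"
      using j r y by (simp add: S.m_assoc[symmetric] frob_form_dbasis)
    finally show "frob_form (y \<otimes>\<^bsub>S\<^esub> (dbasis j \<otimes>\<^bsub>S\<^esub> l r)) = frob_form (y \<otimes>\<^bsub>S\<^esub> (l r \<otimes>\<^bsub>S\<^esub> dbasis j))" .
  qed (use j r in auto)
qed

lemma frob_form_finsum: "f \<in> A \<rightarrow> carrier S \<Longrightarrow> frob_form (finsum S f A) = finsum R (\<lambda>a. frob_form (f a)) A"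
  by (rule lin_restr_regmod_finsum[OF W.R.ring_axioms ringS lhom frob_form_lin])

lemma dbasis_expansion: "s \<in> carrier S \<Longrightarrow> s = finsum S (\<lambda>k. dbasis k \<otimes>\<^bsub>S\<^esub> l (frob_form (cbasis k \<otimes>\<^bsub>S\<^esub> s))) {..<m}"
proof -
  assume s: "s \<in> carrier S"
  let ?z = "finsum S (\<lambda>k. dbasis k \<otimes>\<^bsub>S\<^esub> l (frob_form (cbasis k \<otimes>\<^bsub>S\<^esub> s))) {..<m}"
  show ?thesis
  proof (rule frob_form_separates)
    show "?z \<in> carrier S" using s by (auto intro!: S.finsum_closed)
    fix y assume y: "y \<in> carrier S"
    have "frob_form (y \<otimes>\<^bsub>S\<^esub> ?z) = finsum R (\<lambda>k. frob_form (y \<otimes>\<^bsub>S\<^esub> (dbasis k \<otimes>\<^bsub>S\<^esub> l (frob_form (cbasis k \<otimes>\<^bsub>S\<^esub> s))))) {..<m}"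
      using s y by (subst S.finsum_rdistr) (auto intro!: frob_form_finsum)
    also have "\<dots> = finsum R (\<lambda>k. coord k y \<otimes>\<^bsub>R\<^esub> frob_form (cbasis k \<otimes>\<^bsub>S\<^esub> s)) {..<m}"
      using s y by (intro W.R.finsum_cong') (auto simp: S.m_assoc[symmetric] frob_form_rmult frob_form_dbasis)
    also have "\<dots> = finsum R (\<lambda>k. frob_form (l (coord k y) \<otimes>\<^bsub>S\<^esub> cbasis k \<otimes>\<^bsub>S\<^esub> s)) {..<m}"
      using s y by (intro W.R.finsum_cong') (auto simp: S.m_assoc frob_form_lmult)
    also have "\<dots> = frob_form (finsum S (\<lambda>k. l (coord k y) \<otimes>\<^bsub>S\<^esub> cbasis k) {..<m} \<otimes>\<^bsub>S\<^esub> s)"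
      using s y by (subst S.finsum_ldistr) (auto intro!: frob_form_finsum[symmetric])
    finally show "frob_form (y \<otimes>\<^bsub>S\<^esub> s) = frob_form (y \<otimes>\<^bsub>S\<^esub> ?z)"
      using cbasis_expansion[OF y] by simp
  qed (rule s)
qed

definition eps :: "('s \<times> 'w \<Rightarrow> int) set \<Rightarrow> 'w" where
  "eps = tensor_lift (add_grp W) (\<lambda>(s, w). msmul W (frob_form s) w)"

definition proj :: "nat \<Rightarrow> ('s \<times> 'w \<Rightarrow> int) set \<Rightarrow> 'w" where
  "proj j = tensor_lift (add_grp W) (\<lambda>(s, w). msmul W (coord j s) w)"

definition rmult :: "'s \<Rightarrow> ('s \<times> 'w \<Rightarrow> int) set \<Rightarrow> ('s \<times> 'w \<Rightarrow> int) set" where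
  "rmult c = tensor_map (\<lambda>s. s \<otimes>\<^bsub>S\<^esub> c) id"

lemma eps_balanced: "balanced_map R S l W (add_grp W) (\<lambda>(s, w). msmul W (frob_form s) w)"
  by (rule balanced_mapI)
     (auto simp: W.G.comm_group_axioms frob_form_add W.add_smul W.smul_add frob_form_rmult W.mult_smul)

lemma proj_balanced: "j < m \<Longrightarrow> balanced_map R S l W (add_grp W) (\<lambda>(s, w). msmul W (coord j s) w)"
  by (rule balanced_mapI)
     (auto simp: W.G.comm_group_axioms coord_add W.add_smul W.smul_add coord_rmult W.mult_smul)

lemma eps_hom: "eps \<in> hom (add_grp TM) (add_grp W)"
  unfolding eps_def by (rule balanced_map.tensor_lift_hom[OF eps_balanced])

lemma proj_hom: "j < m \<Longrightarrow> proj j \<in> hom (add_grp TM) (add_grp W)"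
  unfolding proj_def by (rule balanced_map.tensor_lift_hom[OF proj_balanced])

lemma eps_tensor: "s \<in> carrier S \<Longrightarrow> w \<in> mcar W \<Longrightarrow> eps (tensor s w) = msmul W (frob_form s) w"
  unfolding eps_def using balanced_map.tensor_lift_tensor[OF eps_balanced] by simp

lemma proj_tensor: "j < m \<Longrightarrow> s \<in> carrier S \<Longrightarrow> w \<in> mcar W \<Longrightarrow> proj j (tensor s w) = msmul W (coord j s) w"
  unfolding proj_def using balanced_map.tensor_lift_tensor[OF proj_balanced] by simp

lemma eps_closed [simp, intro]: "X \<in> mcar TM \<Longrightarrow> eps X \<in> mcar W"
  using eps_hom unfolding hom_def by auto

lemma proj_closed [simp, intro]: "j < m \<Longrightarrow> X \<in> mcar TM \<Longrightarrow> proj j X \<in> mcar W"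
  using proj_hom unfolding hom_def by auto

lemma eps_add: "X \<in> mcar TM \<Longrightarrow> Y \<in> mcar TM \<Longrightarrow> eps (madd TM X Y) = madd W (eps X) (eps Y)"
  using eps_hom unfolding hom_def by auto

lemma proj_add: "j < m \<Longrightarrow> X \<in> mcar TM \<Longrightarrow> Y \<in> mcar TM \<Longrightarrow> proj j (madd TM X Y) = madd W (proj j X) (proj j Y)"
  using proj_hom unfolding hom_def by auto

lemma eps_lmult:
  assumes r: "r \<in> carrier R" and X: "X \<in> mcar TM"
  shows "eps (msmul TM (l r) X) = msmul W r (eps X)"
  using r by (intro tensor_hom_eqI[OF W.G.comm_group_axioms hom_comp[OF TMmod.smul_hom eps_hom]
        hom_comp[OF eps_hom W.smul_hom[OF r]] _ X])
    (auto simp: TM_smul_tensor eps_tensor frob_form_lmult W.mult_smul)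

lemma proj_lmult:
  assumes j: "j < m" and r: "r \<in> carrier R" and X: "X \<in> mcar TM"
  shows "proj j (msmul TM (l r) X) = msmul W r (proj j X)"
  using r j by (intro tensor_hom_eqI[OF W.G.comm_group_axioms hom_comp[OF TMmod.smul_hom proj_hom[OF j]]
        hom_comp[OF proj_hom[OF j] W.smul_hom[OF r]] _ X])
    (auto simp: TM_smul_tensor proj_tensor coord_lmult W.mult_smul)

lemma tensor_one_smul: "r \<in> carrier R \<Longrightarrow> w \<in> mcar W \<Longrightarrow> tensor \<one>\<^bsub>S\<^esub> (msmul W r w) = msmul TM (l r) (tensor \<one>\<^bsub>S\<^esub> w)"
  using tensor_balanced[of "\<one>\<^bsub>S\<^esub>" r w] by (simp add: TM_smul_tensor)

lemma tensor_expansion_cbasis: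
  assumes Y: "Y \<in> mcar TM"
  shows "Y = finprod (add_grp TM) (\<lambda>j. tensor (cbasis j) (proj j Y)) {..<m}"
proof (rule tensor_hom_eqI[of "add_grp TM" "\<lambda>Y. Y", OF TG.comm_group_axioms _ _ _ Y])
  show "(\<lambda>Y. Y) \<in> hom (add_grp TM) (add_grp TM)" by (rule homI) auto
  show "(\<lambda>Y. finprod (add_grp TM) (\<lambda>j. tensor (cbasis j) (proj j Y)) {..<m}) \<in> hom (add_grp TM) (add_grp TM)"
    by (rule hom_finprod_pointwise[OF TG.comm_group_axioms TG.is_group])
       (auto intro!: hom_comp[OF proj_hom tensor_right_hom])
  fix s w assume s: "s \<in> carrier S" and w: "w \<in> mcar W"
  have "finprod (add_grp TM) (\<lambda>j. tensor (cbasis j) (proj j (tensor s w))) {..<m} =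
      finprod (add_grp TM) (\<lambda>j. tensor (l (coord j s) \<otimes>\<^bsub>S\<^esub> cbasis j) w) {..<m}"
  proof (rule TG.finprod_cong')
    fix j assume "j \<in> {..<m}"
    then have j: "j < m" by simp
    have "tensor (cbasis j) (proj j (tensor s w)) = tensor (cbasis j \<otimes>\<^bsub>S\<^esub> l (coord j s)) w"
      using s w j by (simp add: proj_tensor tensor_balanced)
    also have "cbasis j \<otimes>\<^bsub>S\<^esub> l (coord j s) = l (coord j s) \<otimes>\<^bsub>S\<^esub> cbasis j"
      using centralizes_cbasis[OF j] s j by (simp add: centralizes_def)
    finally show "tensor (cbasis j) (proj j (tensor s w)) = tensor (l (coord j s) \<otimes>\<^bsub>S\<^esub> cbasis j) w" .
  qed (use s w in auto)
  also have "\<dots> = tensor (finsum S (\<lambda>j. l (coord j s) \<otimes>\<^bsub>S\<^esub> cbasis j) {..<m}) w"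
    using s w by (intro tensor_finsum_left[symmetric]) auto
  finally show "tensor s w = finprod (add_grp TM) (\<lambda>j. tensor (cbasis j) (proj j (tensor s w))) {..<m}"
    using cbasis_expansion[OF s] by simp
qed

lemma tensor_expansion_dbasis:
  assumes Y: "Y \<in> mcar TM"
  shows "Y = finprod (add_grp TM) (\<lambda>k. tensor (dbasis k) (eps (msmul TM (cbasis k) Y))) {..<m}"
proof (rule tensor_hom_eqI[of "add_grp TM" "\<lambda>Y. Y", OF TG.comm_group_axioms _ _ _ Y])
  show "(\<lambda>Y. Y) \<in> hom (add_grp TM) (add_grp TM)" by (rule homI) auto
  show "(\<lambda>Y. finprod (add_grp TM) (\<lambda>k. tensor (dbasis k) (eps (msmul TM (cbasis k) Y))) {..<m}) \<in> hom (add_grp TM) (add_grp TM)"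
    by (rule hom_finprod_pointwise[OF TG.comm_group_axioms TG.is_group])
       (auto intro!: hom_comp[OF hom_comp[OF TMmod.smul_hom eps_hom] tensor_right_hom])
  fix s w assume s: "s \<in> carrier S" and w: "w \<in> mcar W"
  have "finprod (add_grp TM) (\<lambda>k. tensor (dbasis k) (eps (msmul TM (cbasis k) (tensor s w)))) {..<m} =
      finprod (add_grp TM) (\<lambda>k. tensor (dbasis k \<otimes>\<^bsub>S\<^esub> l (frob_form (cbasis k \<otimes>\<^bsub>S\<^esub> s))) w) {..<m}"
    using s w by (intro TG.finprod_cong') (auto simp: TM_smul_tensor eps_tensor tensor_balanced)
  also have "\<dots> = tensor (finsum S (\<lambda>k. dbasis k \<otimes>\<^bsub>S\<^esub> l (frob_form (cbasis k \<otimes>\<^bsub>S\<^esub> s))) {..<m}) w"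
    using s w by (intro tensor_finsum_left[symmetric]) auto
  finally show "tensor s w = finprod (add_grp TM) (\<lambda>k. tensor (dbasis k) (eps (msmul TM (cbasis k) (tensor s w)))) {..<m}"
    using dbasis_expansion[OF s] by simp
qed

lemma tensor_compatible_rmult: "centralizes c \<Longrightarrow> tensor_compatible (\<lambda>s. s \<otimes>\<^bsub>S\<^esub> c) id"
  by (simp add: tensor_compatible_def centralizes_def S.l_distr S.m_assoc)

lemma rmult_tensor: "centralizes c \<Longrightarrow> s \<in> carrier S \<Longrightarrow> w \<in> mcar W \<Longrightarrow> rmult c (tensor s w) = tensor (s \<otimes>\<^bsub>S\<^esub> c) w"
  by (simp add: rmult_def tensor_map_tensor tensor_compatible_rmult)

lemma rmult_hom: "centralizes c \<Longrightarrow> rmult c \<in> hom (add_grp TM) (add_grp TM)"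
  unfolding rmult_def by (rule tensor_map_hom[OF tensor_compatible_rmult])

lemma rmult_lin: "centralizes c \<Longrightarrow> lin S TM TM (rmult c)"
  unfolding rmult_def by (rule tensor_map_lin[OF tensor_compatible_rmult]) (auto simp: centralizes_def S.m_assoc)

lemma eps_rmult_dbasis: "j < m \<Longrightarrow> Y \<in> mcar TM \<Longrightarrow> eps (rmult (dbasis j) Y) = proj j Y"
  by (rule tensor_hom_eqI[OF W.G.comm_group_axioms hom_comp[OF rmult_hom[OF centralizes_dbasis] eps_hom] proj_hom])
     (auto simp: rmult_tensor centralizes_dbasis eps_tensor proj_tensor frob_form_dbasis)

abbreviation "rho \<equiv> tensor_rho R S l W"

lemma rho_eq: "rho f = tensor_map id f"
  by (rule tensor_rho_eq_tensor_map)

lemma rho_tensor: "lin R W W f \<Longrightarrow> s \<in> carrier S \<Longrightarrow> w \<in> mcar W \<Longrightarrow> rho f (tensor s w) = tensor s (f w)"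
  by (simp add: rho_eq tensor_map_tensor tensor_compatible_endo)

lemma rho_hom: "lin R W W f \<Longrightarrow> rho f \<in> hom (add_grp TM) (add_grp TM)"
  unfolding rho_eq by (rule tensor_map_hom[OF tensor_compatible_endo])

lemma rho_lin: "lin R W W f \<Longrightarrow> lin S TM TM (rho f)"
  unfolding rho_eq by (rule tensor_map_lin[OF tensor_compatible_endo]) simp_all

lemma eps_rho: "lin R W W f \<Longrightarrow> Z \<in> mcar TM \<Longrightarrow> eps (rho f Z) = f (eps Z)"
  by (rule tensor_hom_eqI[OF W.G.comm_group_axioms hom_comp[OF rho_hom eps_hom] hom_comp[OF eps_hom lin_hom]])
     (auto simp: rho_tensor eps_tensor lin_closed lin_smul)

section \<open>The extension \<open>\<rho> : End\<^sub>R(\<omega>) \<rightarrow> End\<^sub>S(S \<otimes>\<^sub>R \<omega>)\<close>\<close>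

abbreviation "T \<equiv> endring R W"
abbreviation "\<Gamma> \<equiv> endring S TM"

lemma T_carrier_iff: "f \<in> carrier T \<longleftrightarrow> lin R W W f"
  by (simp add: W.endring_simps)
lemma Gamma_carrier_iff: "f \<in> carrier \<Gamma> \<longleftrightarrow> lin S TM TM f"
  by (simp add: TMmod.endring_simps)

lemma Gamma_mult_apply: "Z \<in> mcar TM \<Longrightarrow> (a \<otimes>\<^bsub>\<Gamma>\<^esub> b) Z = b (a Z)"
  by (simp add: TMmod.endring_simps)
lemma Gamma_add_apply: "Z \<in> mcar TM \<Longrightarrow> (a \<oplus>\<^bsub>\<Gamma>\<^esub> b) Z = madd TM (a Z) (b Z)"
  by (simp add: TMmod.endring_simps)
lemma T_mult_apply: "w \<in> mcar W \<Longrightarrow> (a \<otimes>\<^bsub>T\<^esub> b) w = b (a w)"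
  by (simp add: W.endring_simps)

lemma rho_carrier: "f \<in> carrier T \<Longrightarrow> rho f \<in> carrier \<Gamma>"
  by (simp add: T_carrier_iff Gamma_carrier_iff rho_lin)

lemma rmult_carrier: "centralizes c \<Longrightarrow> rmult c \<in> carrier \<Gamma>"
  by (simp add: Gamma_carrier_iff rmult_lin)

lemma Gamma_eqI:
  "x \<in> carrier \<Gamma> \<Longrightarrow> y \<in> carrier \<Gamma> \<Longrightarrow> (\<And>w. w \<in> mcar W \<Longrightarrow> x (tensor \<one>\<^bsub>S\<^esub> w) = y (tensor \<one>\<^bsub>S\<^esub> w)) \<Longrightarrow> x = y"
  by (rule endo_eqI) (simp_all add: Gamma_carrier_iff)

lemma rho_ring_hom: "rho \<in> ring_hom T \<Gamma>"
proof (rule ring_hom_memI)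
  fix f g assume f: "f \<in> carrier T" and g: "g \<in> carrier T"
  have fl: "lin R W W f" and gl: "lin R W W g" using f g by (simp_all add: T_carrier_iff)
  show "rho (f \<otimes>\<^bsub>T\<^esub> g) = rho f \<otimes>\<^bsub>\<Gamma>\<^esub> rho g"
    using W.ER.m_closed[OF f g] fl gl
    by (intro Gamma_eqI rho_carrier TMmod.ER.m_closed f g)
       (auto simp: rho_tensor Gamma_mult_apply T_mult_apply lin_closed T_carrier_iff)
  show "rho (f \<oplus>\<^bsub>T\<^esub> g) = rho f \<oplus>\<^bsub>\<Gamma>\<^esub> rho g"
    using W.ER.a_closed[OF f g] fl gl
    by (intro Gamma_eqI rho_carrier TMmod.ER.a_closed f g)
       (auto simp: rho_tensor Gamma_add_apply lin_closed tensor_add_right T_carrier_iff W.endring_simps)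
next
  show "rho \<one>\<^bsub>T\<^esub> = \<one>\<^bsub>\<Gamma>\<^esub>"
    using W.ER.one_closed
    by (intro Gamma_eqI rho_carrier TMmod.ER.one_closed)
       (auto simp: rho_tensor T_carrier_iff W.endring_simps TMmod.endring_simps)
qed (rule rho_carrier)

definition from_coords :: "(nat \<Rightarrow> 'w \<Rightarrow> 'w) \<Rightarrow> ('s \<times> 'w \<Rightarrow> int) set \<Rightarrow> ('s \<times> 'w \<Rightarrow> int) set" where
  "from_coords = (\<lambda>v\<in>mcar (freemod T m). finsum \<Gamma> (\<lambda>j. rho (v j) \<otimes>\<^bsub>\<Gamma>\<^esub> rmult (cbasis j)) {..<m})"

definition coord_endo :: "(('s \<times> 'w \<Rightarrow> int) set \<Rightarrow> ('s \<times> 'w \<Rightarrow> int) set) \<Rightarrow> nat \<Rightarrow> 'w \<Rightarrow> 'w" where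
  "coord_endo g j = (\<lambda>w\<in>mcar W. proj j (g (tensor \<one>\<^bsub>S\<^esub> w)))"

definition to_coords :: "(('s \<times> 'w \<Rightarrow> int) set \<Rightarrow> ('s \<times> 'w \<Rightarrow> int) set) \<Rightarrow> nat \<Rightarrow> 'w \<Rightarrow> 'w" where
  "to_coords = (\<lambda>g\<in>carrier \<Gamma>. (\<lambda>j. if j < m then coord_endo g j else \<zero>\<^bsub>T\<^esub>))"

lemma coord_endo_carrier: "g \<in> carrier \<Gamma> \<Longrightarrow> j < m \<Longrightarrow> coord_endo g j \<in> carrier T"
  unfolding T_carrier_iff
proof (rule linI)
  assume "g \<in> carrier \<Gamma>" and j: "j < m"
  then have gl: "lin S TM TM g" by (simp add: Gamma_carrier_iff)
  show "\<And>w. w \<in> mcar W \<Longrightarrow> coord_endo g j w \<in> mcar W" using gl j by (simp add: coord_endo_def lin_closed)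
  show "\<And>w w'. w \<in> mcar W \<Longrightarrow> w' \<in> mcar W \<Longrightarrow> coord_endo g j (madd W w w') = madd W (coord_endo g j w) (coord_endo g j w')"
    using gl j by (simp add: coord_endo_def tensor_add_right lin_add lin_closed proj_add)
  show "\<And>r w. r \<in> carrier R \<Longrightarrow> w \<in> mcar W \<Longrightarrow> coord_endo g j (msmul W r w) = msmul W r (coord_endo g j w)"
    using gl j by (simp add: coord_endo_def tensor_one_smul lin_smul lin_closed proj_lmult)
qed (simp add: coord_endo_def)

lemma to_coords_mem: "g \<in> carrier \<Gamma> \<Longrightarrow> to_coords g \<in> mcar (freemod T m)"
  using coord_endo_carrier by (simp add: to_coords_def freemod_simps)

lemma from_coords_summands_carrier:
  "v \<in> mcar (freemod T m) \<Longrightarrow> (\<lambda>j. rho (v j) \<otimes>\<^bsub>\<Gamma>\<^esub> rmult (cbasis j)) \<in> {..<m} \<rightarrow> carrier \<Gamma>"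
  by (auto simp: freemod_simps intro!: TMmod.ER.m_closed rho_carrier rmult_carrier centralizes_cbasis)

lemma from_coords_carrier: "v \<in> mcar (freemod T m) \<Longrightarrow> from_coords v \<in> carrier \<Gamma>"
  using from_coords_summands_carrier by (simp add: from_coords_def TMmod.ER.finsum_closed)

lemma from_coords_lin: "lin T (freemod T m) (restr_mod T \<Gamma> rho) from_coords"
proof (rule linI)
  interpret F: lmodule T "freemod T m" by (rule lmodule.intro[OF freemod_lmod[OF W.endring_ring]])
  fix v w assume v: "v \<in> mcar (freemod T m)" and w: "w \<in> mcar (freemod T m)"
  have vc: "\<And>j. j < m \<Longrightarrow> v j \<in> carrier T" and wc: "\<And>j. j < m \<Longrightarrow> w j \<in> carrier T"
    using v w by (auto simp: freemod_simps)
  have "from_coords (madd (freemod T m) v w) =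
      finsum \<Gamma> (\<lambda>j. rho (madd (freemod T m) v w j) \<otimes>\<^bsub>\<Gamma>\<^esub> rmult (cbasis j)) {..<m}"
    using F.add_closed[OF v w] by (simp add: from_coords_def)
  also have "\<dots> = finsum \<Gamma> (\<lambda>j. rho (v j) \<otimes>\<^bsub>\<Gamma>\<^esub> rmult (cbasis j) \<oplus>\<^bsub>\<Gamma>\<^esub> rho (w j) \<otimes>\<^bsub>\<Gamma>\<^esub> rmult (cbasis j)) {..<m}"
    using vc wc
    by (intro TMmod.ER.finsum_cong')
       (auto simp: freemod_simps ring_hom_add[OF rho_ring_hom] TMmod.ER.l_distr rho_carrier
         rmult_carrier centralizes_cbasis intro!: TMmod.ER.a_closed TMmod.ER.m_closed)
  also have "\<dots> = madd (restr_mod T \<Gamma> rho) (from_coords v) (from_coords w)"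
    using from_coords_summands_carrier[OF v] from_coords_summands_carrier[OF w] v w
    by (simp add: from_coords_def TMmod.ER.finsum_addf)
  finally show "from_coords (madd (freemod T m) v w) = madd (restr_mod T \<Gamma> rho) (from_coords v) (from_coords w)" .
next
  interpret F: lmodule T "freemod T m" by (rule lmodule.intro[OF freemod_lmod[OF W.endring_ring]])
  fix a v assume a: "a \<in> carrier T" and v: "v \<in> mcar (freemod T m)"
  have vc: "\<And>j. j < m \<Longrightarrow> v j \<in> carrier T" using v by (auto simp: freemod_simps)
  have "from_coords (msmul (freemod T m) a v) =
      finsum \<Gamma> (\<lambda>j. rho (msmul (freemod T m) a v j) \<otimes>\<^bsub>\<Gamma>\<^esub> rmult (cbasis j)) {..<m}"
    using F.smul_closed[OF a v] by (simp add: from_coords_def)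
  also have "\<dots> = finsum \<Gamma> (\<lambda>j. rho a \<otimes>\<^bsub>\<Gamma>\<^esub> (rho (v j) \<otimes>\<^bsub>\<Gamma>\<^esub> rmult (cbasis j))) {..<m}"
    using vc a
    by (intro TMmod.ER.finsum_cong')
       (auto simp: freemod_simps ring_hom_mult[OF rho_ring_hom] TMmod.ER.m_assoc rho_carrier
         rmult_carrier centralizes_cbasis intro!: TMmod.ER.m_closed)
  also have "\<dots> = msmul (restr_mod T \<Gamma> rho) a (from_coords v)"
    using from_coords_summands_carrier[OF v] v a by (simp add: from_coords_def TMmod.ER.finsum_rdistr rho_carrier)
  finally show "from_coords (msmul (freemod T m) a v) = msmul (restr_mod T \<Gamma> rho) a (from_coords v)" .
qed (simp add: from_coords_carrier, simp add: from_coords_def)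

lemma to_coords_lin: "lin T (restr_mod T \<Gamma> rho) (freemod T m) to_coords"
proof (rule linI)
  fix g g' assume g: "g \<in> mcar (restr_mod T \<Gamma> rho)" and g': "g' \<in> mcar (restr_mod T \<Gamma> rho)"
  have gl: "lin S TM TM g" "lin S TM TM g'" using g g' by (simp_all add: Gamma_carrier_iff)
  have "coord_endo (g \<oplus>\<^bsub>\<Gamma>\<^esub> g') j = coord_endo g j \<oplus>\<^bsub>T\<^esub> coord_endo g' j" if "j < m" for j
    unfolding coord_endo_def W.endring_simps
    by (rule restrict_ext) (use gl that in \<open>simp add: Gamma_add_apply proj_add lin_closed\<close>)
  then show "to_coords (madd (restr_mod T \<Gamma> rho) g g') = madd (freemod T m) (to_coords g) (to_coords g')"
    using g g' by (auto simp: to_coords_def freemod_simps TMmod.ER.a_closed)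
next
  fix a g assume a: "a \<in> carrier T" and g: "g \<in> mcar (restr_mod T \<Gamma> rho)"
  have gl: "lin S TM TM g" and al: "lin R W W a" using g a by (simp_all add: Gamma_carrier_iff T_carrier_iff)
  have "coord_endo (rho a \<otimes>\<^bsub>\<Gamma>\<^esub> g) j = a \<otimes>\<^bsub>T\<^esub> coord_endo g j" if "j < m" for j
    unfolding coord_endo_def W.endring_simps
    by (rule restrict_ext) (use gl al that in \<open>simp add: Gamma_mult_apply rho_tensor lin_closed\<close>)
  then show "to_coords (msmul (restr_mod T \<Gamma> rho) a g) = msmul (freemod T m) a (to_coords g)"
    using g a by (auto simp: to_coords_def freemod_simps TMmod.ER.m_closed rho_carrier)
qed (simp add: to_coords_mem, simp add: to_coords_def)

lemma from_coords_to_coords: "g \<in> carrier \<Gamma> \<Longrightarrow> from_coords (to_coords g) = g"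
proof (rule Gamma_eqI[OF from_coords_carrier[OF to_coords_mem]])
  fix w assume g: "g \<in> carrier \<Gamma>" and w: "w \<in> mcar W"
  let ?Y = "g (tensor \<one>\<^bsub>S\<^esub> w)"
  have Y: "?Y \<in> mcar TM" using g w by (simp add: Gamma_carrier_iff lin_closed)
  have "from_coords (to_coords g) (tensor \<one>\<^bsub>S\<^esub> w) =
      finprod (add_grp TM) (\<lambda>j. (rho (to_coords g j) \<otimes>\<^bsub>\<Gamma>\<^esub> rmult (cbasis j)) (tensor \<one>\<^bsub>S\<^esub> w)) {..<m}"
    using from_coords_summands_carrier[OF to_coords_mem[OF g]] w to_coords_mem[OF g]
    by (simp add: from_coords_def TMmod.endring_finsum_eval)
  also have "\<dots> = finprod (add_grp TM) (\<lambda>j. tensor (cbasis j) (proj j ?Y)) {..<m}"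
  proof (rule TG.finprod_cong')
    fix j assume "j \<in> {..<m}"
    then have j: "j < m" by simp
    have "lin R W W (coord_endo g j)" using coord_endo_carrier[OF g j] by (simp add: T_carrier_iff)
    then show "(rho (to_coords g j) \<otimes>\<^bsub>\<Gamma>\<^esub> rmult (cbasis j)) (tensor \<one>\<^bsub>S\<^esub> w) = tensor (cbasis j) (proj j ?Y)"
      using j g w Y by (simp add: Gamma_mult_apply to_coords_def rho_tensor lin_closed rmult_tensor
          centralizes_cbasis coord_endo_def)
  qed (use Y in auto)
  also have "\<dots> = ?Y" using tensor_expansion_cbasis[OF Y] by simp
  finally show "from_coords (to_coords g) (tensor \<one>\<^bsub>S\<^esub> w) = g (tensor \<one>\<^bsub>S\<^esub> w)" .
qed

lemma fg_proj_Gamma: "fg_proj T (restr_mod T \<Gamma> rho)"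
  unfolding fg_proj_def using from_coords_lin to_coords_lin from_coords_to_coords by auto

definition frob_iso :: "(('s \<times> 'w \<Rightarrow> int) set \<Rightarrow> ('s \<times> 'w \<Rightarrow> int) set) \<Rightarrow>
    (('s \<times> 'w \<Rightarrow> int) set \<Rightarrow> ('s \<times> 'w \<Rightarrow> int) set) \<Rightarrow> 'w \<Rightarrow> 'w" where
  "frob_iso x = (\<lambda>y\<in>carrier \<Gamma>. \<lambda>w\<in>mcar W. eps (x (y (tensor \<one>\<^bsub>S\<^esub> w))))"

lemma frob_iso_apply_carrier: "x \<in> carrier \<Gamma> \<Longrightarrow> y \<in> carrier \<Gamma> \<Longrightarrow> frob_iso x y \<in> carrier T"
  unfolding T_carrier_iff
proof (rule linI)
  assume "x \<in> carrier \<Gamma>" "y \<in> carrier \<Gamma>"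
  then have y: "y \<in> carrier \<Gamma>" and xl: "lin S TM TM x" and yl: "lin S TM TM y"
    by (simp_all add: Gamma_carrier_iff)
  show "\<And>w. w \<in> mcar W \<Longrightarrow> frob_iso x y w \<in> mcar W" using y xl yl by (simp add: frob_iso_def lin_closed)
  show "\<And>w. w \<notin> mcar W \<Longrightarrow> frob_iso x y w = undefined" using y by (simp add: frob_iso_def)
  show "\<And>w w'. w \<in> mcar W \<Longrightarrow> w' \<in> mcar W \<Longrightarrow> frob_iso x y (madd W w w') = madd W (frob_iso x y w) (frob_iso x y w')"
    using y xl yl by (simp add: frob_iso_def tensor_add_right lin_add lin_closed eps_add)
  show "\<And>r w. r \<in> carrier R \<Longrightarrow> w \<in> mcar W \<Longrightarrow> frob_iso x y (msmul W r w) = msmul W r (frob_iso x y w)"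
    using y xl yl by (simp add: frob_iso_def tensor_one_smul lin_smul lin_closed eps_lmult)
qed

lemma frob_iso_lin: "x \<in> carrier \<Gamma> \<Longrightarrow> lin T (restr_mod T \<Gamma> rho) (regmod T) (frob_iso x)"
proof (rule linI)
  assume x: "x \<in> carrier \<Gamma>"
  have xl: "lin S TM TM x" using x by (simp add: Gamma_carrier_iff)
  show "\<And>y. y \<in> mcar (restr_mod T \<Gamma> rho) \<Longrightarrow> frob_iso x y \<in> mcar (regmod T)"
    using frob_iso_apply_carrier[OF x] by simp
  show "\<And>y. y \<notin> mcar (restr_mod T \<Gamma> rho) \<Longrightarrow> frob_iso x y = undefined" by (simp add: frob_iso_def)
  fix y y' assume y: "y \<in> mcar (restr_mod T \<Gamma> rho)" and y': "y' \<in> mcar (restr_mod T \<Gamma> rho)"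
  have yl: "lin S TM TM y" "lin S TM TM y'" using y y' by (simp_all add: Gamma_carrier_iff)
  show "frob_iso x (madd (restr_mod T \<Gamma> rho) y y') = madd (regmod T) (frob_iso x y) (frob_iso x y')"
    using y y' TMmod.ER.a_closed[of y y'] unfolding restr_mod_simps regmod_simps frob_iso_def W.endring_simps
    by (simp, intro restrict_ext)
       (simp add: Gamma_add_apply lin_add[OF xl] lin_closed[OF yl(1)] lin_closed[OF yl(2)] eps_add lin_closed[OF xl])
next
  fix a y assume a: "a \<in> carrier T" and y: "y \<in> mcar (restr_mod T \<Gamma> rho)"
  have yl: "lin S TM TM y" and al: "lin R W W a" using y a by (simp_all add: Gamma_carrier_iff T_carrier_iff)
  show "frob_iso x (msmul (restr_mod T \<Gamma> rho) a y) = msmul (regmod T) a (frob_iso x y)"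
    using y TMmod.ER.m_closed[OF rho_carrier[OF a], of y]
    unfolding restr_mod_simps regmod_simps frob_iso_def W.endring_simps
    by (simp, intro restrict_ext) (simp add: Gamma_mult_apply rho_tensor al lin_closed[OF al])
qed

lemma frob_iso_add:
  assumes x: "x \<in> carrier \<Gamma>" and x': "x' \<in> carrier \<Gamma>"
  shows "frob_iso (x \<oplus>\<^bsub>\<Gamma>\<^esub> x') = (\<lambda>y\<in>carrier \<Gamma>. frob_iso x y \<oplus>\<^bsub>T\<^esub> frob_iso x' y)"
proof (rule ext)
  fix y
  have xl: "lin S TM TM x" "lin S TM TM x'" using x x' by (simp_all add: Gamma_carrier_iff)
  show "frob_iso (x \<oplus>\<^bsub>\<Gamma>\<^esub> x') y = (\<lambda>y\<in>carrier \<Gamma>. frob_iso x y \<oplus>\<^bsub>T\<^esub> frob_iso x' y) y"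
  proof (cases "y \<in> carrier \<Gamma>")
    case True
    then have yl: "lin S TM TM y" by (simp add: Gamma_carrier_iff)
    show ?thesis using True unfolding frob_iso_def W.endring_simps
      by (simp, intro restrict_ext)
         (simp add: Gamma_add_apply lin_closed[OF yl] eps_add lin_closed[OF xl(1)] lin_closed[OF xl(2)])
  qed (simp add: frob_iso_def)
qed

lemma frob_iso_bimod:
  assumes s: "s \<in> carrier \<Gamma>" and x: "x \<in> carrier \<Gamma>" and r: "r \<in> carrier T"
  shows "frob_iso (s \<otimes>\<^bsub>\<Gamma>\<^esub> x \<otimes>\<^bsub>\<Gamma>\<^esub> rho r) = (\<lambda>y\<in>carrier \<Gamma>. frob_iso x (y \<otimes>\<^bsub>\<Gamma>\<^esub> s) \<otimes>\<^bsub>T\<^esub> r)"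
proof (rule ext)
  fix y
  have sl: "lin S TM TM s" and xl: "lin S TM TM x" and rl: "lin R W W r"
    using s x r by (simp_all add: Gamma_carrier_iff T_carrier_iff)
  show "frob_iso (s \<otimes>\<^bsub>\<Gamma>\<^esub> x \<otimes>\<^bsub>\<Gamma>\<^esub> rho r) y = (\<lambda>y\<in>carrier \<Gamma>. frob_iso x (y \<otimes>\<^bsub>\<Gamma>\<^esub> s) \<otimes>\<^bsub>T\<^esub> r) y"
  proof (cases "y \<in> carrier \<Gamma>")
    case True
    then have yl: "lin S TM TM y" by (simp add: Gamma_carrier_iff)
    show ?thesis using True TMmod.ER.m_closed[OF True s] unfolding frob_iso_def W.endring_simps
      by (simp, intro restrict_ext)
         (simp add: Gamma_mult_apply lin_closed[OF yl] lin_closed[OF sl] lin_closed[OF xl] eps_rho[OF rl])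
  qed (simp add: frob_iso_def)
qed

text \<open>Injectivity: by the \<open>x\<^sub>j\<close>-expansion, \<open>x(1 \<otimes> w)\<close> is determined by the values
  \<open>\<epsilon>(c\<^sub>k \<cdot> x(1 \<otimes> w)) = frob_iso x (rmult c\<^sub>k) w\<close>.\<close>
lemma frob_iso_inj: "inj_on frob_iso (carrier \<Gamma>)"
proof (rule inj_onI)
  fix x x' assume x: "x \<in> carrier \<Gamma>" and x': "x' \<in> carrier \<Gamma>" and e: "frob_iso x = frob_iso x'"
  have xl: "lin S TM TM x" "lin S TM TM x'" using x x' by (simp_all add: Gamma_carrier_iff)
  show "x = x'"
  proof (rule Gamma_eqI[OF x x'])
    fix w assume w: "w \<in> mcar W"
    let ?X = "x (tensor \<one>\<^bsub>S\<^esub> w)" and ?X' = "x' (tensor \<one>\<^bsub>S\<^esub> w)"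
    have X: "?X \<in> mcar TM" "?X' \<in> mcar TM" using w xl by (simp_all add: lin_closed)
    have frob_iso_rmult: "frob_iso z (rmult (cbasis k)) w = eps (msmul TM (cbasis k) (z (tensor \<one>\<^bsub>S\<^esub> w)))"
      if "z \<in> carrier \<Gamma>" "k < m" for z k
      using that w lin_smul[of S TM TM z "cbasis k" "tensor \<one>\<^bsub>S\<^esub> w"]
      by (simp add: frob_iso_def rmult_lin centralizes_cbasis rmult_tensor TM_smul_tensor Gamma_carrier_iff)
    have "?X = finprod (add_grp TM) (\<lambda>k. tensor (dbasis k) (eps (msmul TM (cbasis k) ?X))) {..<m}"
      by (rule tensor_expansion_dbasis[OF X(1)])
    also have "\<dots> = finprod (add_grp TM) (\<lambda>k. tensor (dbasis k) (eps (msmul TM (cbasis k) ?X'))) {..<m}"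
      using X e frob_iso_rmult[OF x] frob_iso_rmult[OF x'] by (intro TG.finprod_cong') auto
    also have "\<dots> = ?X'" by (rule tensor_expansion_dbasis[OF X(2), symmetric])
    finally show "?X = ?X'" .
  qed
qed

lemma lin_Gamma_expansion:
  assumes \<phi>: "lin T (restr_mod T \<Gamma> rho) (regmod T) \<phi>" and y: "y \<in> carrier \<Gamma>"
  shows "\<phi> y = finsum T (\<lambda>j. coord_endo y j \<otimes>\<^bsub>T\<^esub> \<phi> (rmult (cbasis j))) {..<m}"
proof -
  have c: "\<And>j. j < m \<Longrightarrow> coord_endo y j \<in> carrier T" by (rule coord_endo_carrier[OF y])
  have "\<phi> y = \<phi> (from_coords (to_coords y))" using from_coords_to_coords[OF y] by simp
  also have "\<dots> = finsum T (\<lambda>j. \<phi> (rho (to_coords y j) \<otimes>\<^bsub>\<Gamma>\<^esub> rmult (cbasis j))) {..<m}"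
    using to_coords_mem[OF y] from_coords_summands_carrier[OF to_coords_mem[OF y]]
    by (simp add: from_coords_def lin_restr_regmod_finsum[OF W.endring_ring TMmod.endring_ring rho_ring_hom \<phi>])
  also have "\<dots> = finsum T (\<lambda>j. coord_endo y j \<otimes>\<^bsub>T\<^esub> \<phi> (rmult (cbasis j))) {..<m}"
    using c lin_smul[OF \<phi>] lin_closed[OF \<phi>] y
    by (intro W.ER.finsum_cong')
       (auto simp: to_coords_def rmult_carrier centralizes_cbasis intro!: W.ER.m_closed)
  finally show ?thesis .
qed

lemma frob_iso_dbasis_sum:
  assumes \<tau>: "\<And>j. j < m \<Longrightarrow> \<tau> j \<in> carrier T" and y: "y \<in> carrier \<Gamma>"
  defines "x \<equiv> finsum \<Gamma> (\<lambda>j. rmult (dbasis j) \<otimes>\<^bsub>\<Gamma>\<^esub> rho (\<tau> j)) {..<m}"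
  shows "frob_iso x y = finsum T (\<lambda>j. coord_endo y j \<otimes>\<^bsub>T\<^esub> \<tau> j) {..<m}"
proof -
  have \<tau>l: "\<And>j. j < m \<Longrightarrow> lin R W W (\<tau> j)" using \<tau> by (simp add: T_carrier_iff)
  have c: "\<And>j. j < m \<Longrightarrow> coord_endo y j \<in> carrier T" by (rule coord_endo_carrier[OF y])
  have xs: "(\<lambda>j. rmult (dbasis j) \<otimes>\<^bsub>\<Gamma>\<^esub> rho (\<tau> j)) \<in> {..<m} \<rightarrow> carrier \<Gamma>"
    using \<tau> by (auto intro!: TMmod.ER.m_closed rmult_carrier centralizes_dbasis rho_carrier)
  have x: "x \<in> carrier \<Gamma>" unfolding x_def using xs by (rule TMmod.ER.finsum_closed)
  have rhs: "finsum T (\<lambda>j. coord_endo y j \<otimes>\<^bsub>T\<^esub> \<tau> j) {..<m} \<in> carrier T"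
    using c \<tau> by (auto intro!: W.ER.finsum_closed W.ER.m_closed)
  show ?thesis
  proof (rule lin_ext[OF frob_iso_apply_carrier[OF x y, unfolded T_carrier_iff] rhs[unfolded T_carrier_iff]])
    fix w assume w: "w \<in> mcar W"
    let ?Y = "y (tensor \<one>\<^bsub>S\<^esub> w)"
    have Y: "?Y \<in> mcar TM" using w y by (simp add: Gamma_carrier_iff lin_closed)
    have RY: "\<And>j. j < m \<Longrightarrow> rmult (dbasis j) ?Y \<in> mcar TM"
      using lin_closed[OF rmult_lin[OF centralizes_dbasis] Y] by blast
    have "frob_iso x y w = eps (finprod (add_grp TM) (\<lambda>j. rho (\<tau> j) (rmult (dbasis j) ?Y)) {..<m})"
      using y w xs Y by (simp add: frob_iso_def x_def TMmod.endring_finsum_eval Gamma_mult_apply)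
    also have "\<dots> = finprod (add_grp W) (\<lambda>j. eps (rho (\<tau> j) (rmult (dbasis j) ?Y))) {..<m}"
      using RY \<tau>l by (intro hom_finprod[OF TG.comm_group_axioms W.G.comm_group_axioms eps_hom]) (auto intro!: lin_closed[OF rho_lin])
    also have "\<dots> = finprod (add_grp W) (\<lambda>j. (coord_endo y j \<otimes>\<^bsub>T\<^esub> \<tau> j) w) {..<m}"
      using w Y RY \<tau>l by (intro W.G.finprod_cong')
        (auto simp: eps_rho eps_rmult_dbasis T_mult_apply coord_endo_def intro!: lin_closed[OF \<tau>l])
    also have "\<dots> = finsum T (\<lambda>j. coord_endo y j \<otimes>\<^bsub>T\<^esub> \<tau> j) {..<m} w"
      using w c \<tau> by (intro W.endring_finsum_eval[symmetric]) (auto intro!: W.ER.m_closed)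
    finally show "frob_iso x y w = finsum T (\<lambda>j. coord_endo y j \<otimes>\<^bsub>T\<^esub> \<tau> j) {..<m} w" .
  qed
qed

text \<open>Surjectivity: \<open>\<phi>\<close> is hit by \<open>\<Sum>\<^sub>j rmult x\<^sub>j \<cdot> \<rho>(\<phi>(rmult c\<^sub>j))\<close>.\<close>
lemma frob_iso_surj:
  assumes \<phi>: "lin T (restr_mod T \<Gamma> rho) (regmod T) \<phi>"
  shows "\<phi> \<in> frob_iso ` carrier \<Gamma>"
proof -
  define \<tau> where "\<tau> j = \<phi> (rmult (cbasis j))" for j
  have \<tau>: "\<And>j. j < m \<Longrightarrow> \<tau> j \<in> carrier T"
    using lin_closed[OF \<phi>] rmult_carrier[OF centralizes_cbasis] by (simp add: \<tau>_def)
  define x where "x = finsum \<Gamma> (\<lambda>j. rmult (dbasis j) \<otimes>\<^bsub>\<Gamma>\<^esub> rho (\<tau> j)) {..<m}"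
  have x: "x \<in> carrier \<Gamma>"
    unfolding x_def using \<tau> by (auto intro!: TMmod.ER.finsum_closed TMmod.ER.m_closed rmult_carrier centralizes_dbasis rho_carrier)
  have "frob_iso x = \<phi>"
  proof
    fix y
    show "frob_iso x y = \<phi> y"
    proof (cases "y \<in> carrier \<Gamma>")
      case True
      then show ?thesis
        using frob_iso_dbasis_sum[OF \<tau> True] lin_Gamma_expansion[OF \<phi> True] by (simp add: x_def \<tau>_def)
    next
      case False
      then show ?thesis using lin_extensional[OF \<phi>] by (simp add: frob_iso_def extensional_def)
    qed
  qed
  then show ?thesis using x by blast
qed

lemma frobenius_ext_endrings: "frobenius_ext T \<Gamma> rho"
  unfolding frobenius_ext_def
proof (intro conjI exI[of _ frob_iso] ballI)
  show "bij_betw frob_iso (carrier \<Gamma>) {\<phi>. lin T (restr_mod T \<Gamma> rho) (regmod T) \<phi>}"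
    unfolding bij_betw_def using frob_iso_inj frob_iso_lin frob_iso_surj by blast
qed (simp_all add: W.endring_ring TMmod.endring_ring rho_ring_hom fg_proj_Gamma frob_iso_add frob_iso_bimod)

end

theorem theorem3p5:
  fixes R :: "'r ring" and S :: "'s ring" and l :: "'r \<Rightarrow> 's"
    and \<omega> :: "('r, 'w) lmod"
    and k :: nat and P :: "nat \<Rightarrow> ('w \<Rightarrow> 'w, 'p) lmod"
    and d :: "nat \<Rightarrow> 'p \<Rightarrow> 'p" and \<epsilon> :: "'p \<Rightarrow> 'w"
  assumes "two_sided_noetherian R" and "two_sided_noetherian S"
    and "frobenius_ext R S l"
    and "centrally_projective R S l"
    and "wakamatsu_tilting R \<omega>"
    and "pd_le (opring (endring R \<omega>)) (right_end_mod R \<omega>) k P d \<epsilon>"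
  shows "frobenius_ext (endring R \<omega>) (endring S (tensor_mod R S l \<omega>)) (tensor_rho R S l \<omega>)"
proof -
  from assms(3) obtain \<psi> where "ring S" "l \<in> ring_hom R S"
    and "bij_betw \<psi> (carrier S) {\<phi>. lin R (restr_mod R S l) (regmod R) \<phi>}"
    and "\<forall>s\<in>carrier S. \<forall>x\<in>carrier S. \<forall>r\<in>carrier R.
           \<psi> (s \<otimes>\<^bsub>S\<^esub> x \<otimes>\<^bsub>S\<^esub> l r) = (\<lambda>y\<in>carrier S. \<psi> x (y \<otimes>\<^bsub>S\<^esub> s) \<otimes>\<^bsub>R\<^esub> r)"
    unfolding frobenius_ext_def by blast
  moreover from assms(4) obtain n p i where
    "lin R (freemod R n) (restr_mod R S l) p" "lin R (restr_mod R S l) (freemod R n) i"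
    "\<forall>v\<in>mcar (freemod R n). \<forall>r\<in>carrier R. p (freemod_rsmul R n v r) = p v \<otimes>\<^bsub>S\<^esub> l r"
    "\<forall>x\<in>carrier S. \<forall>r\<in>carrier R. i (x \<otimes>\<^bsub>S\<^esub> l r) = freemod_rsmul R n (i x) r"
    "\<forall>x\<in>carrier S. p (i x) = x"
    unfolding centrally_projective_def by blast
  moreover have "is_lmod R \<omega>" using assms(5) by (simp add: wakamatsu_tilting_def)
  ultimately interpret frobenius_setting R S l \<omega> \<psi> n p i
    by (intro frobenius_setting.intro tensor_setting.intro frobenius_setting_axioms.intro) auto
  show ?thesis by (rule frobenius_ext_endrings)
qed

end
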